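(* Let $m\ge1$, $\vec s=(s_1,\dots,s_m)$ with $s_j\in[1,\infty)$, $\vec q=(q_1,\dots,q_m)$, $\vec r=(r_1,\dots,r_m)$ with $q_j,r_j\in(s_j,\infty)$, $\frac1q=\sum_j\frac1{q_j}<1$, $\frac1r=\sum_j\frac1{r_j}<1$, $\frac1s=\sum_j\frac1{s_j}$. Let $\vec v=(v_1,\dots,v_m)\in\prod_{j=1}^mA_{q_j/s_j}(\mathbb{R}^d)$ and $\vec w=(w_1,\dots,w_m)\in\prod_{j=1}^mA_{r_j/s_j}(\mathbb{R}^d)$. Then there exist $\vec p=(p_1,\dots,p_m)$ with $p_j\in(s_j,\infty)$ and $\frac1p=\sum_j\frac1{p_j}<1$, $\vec u=(u_1,\dots,u_m)\in\prod_{j=1}^mA_{p_j/s_j}(\mathbb{R}^d)$ and $\theta\in(0,1)$ such that $$\frac1{r_j}=\frac{1-\theta}{p_j}+\frac\theta{q_j},\qquad w_j^{1/r_j}=u_j^{(1-\theta)/p_j}v_j^{\theta/q_j},\qquad j=1,\dots,m,$$ and $$\frac1r=\frac{1-\theta}p+\frac\theta q,\qquad \nu_{\vec w,\vec r}^{1/r}=\nu_{\vec u,\vec p}^{(1-\theta)/p}\nu_{\vec v,\vec q}^{\theta/q}.$$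
   Context: For $1<t<\infty$, $w\in A_t(\mathbb{R}^d)$ means $\sup_Q\langle w\rangle_Q\langle w^{-1/(t-1)}\rangle_Q^{t-1}<\infty$ over cubes $Q\subset\mathbb{R}^d$, with $\langle f\rangle_Q=|Q|^{-1}\int_Qf$; $A_{q_j/s_j}$ denotes $A_t$ with $t=q_j/s_j$. For $\vec p$ with $\frac1p=\sum_j\frac1{p_j}$ and weights $\vec w$, $\nu_{\vec w,\vec p}=\prod_jw_j^{p/p_j}$. *)

theory Defs
  imports "HOL-Analysis.Analysis"
begin

definition cube :: "'a::euclidean_space \<Rightarrow> real \<Rightarrow> 'a set" where
  "cube a h = cbox a (a + h *\<^sub>R One)"

definition avg :: "'a::euclidean_space set \<Rightarrow> ('a \<Rightarrow> real) \<Rightarrow> real" where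
  "avg Q f = enn2real (\<integral>\<^sup>+ x\<in>Q. ennreal (f x) \<partial>lebesgue) / measure lebesgue Q"

definition A_weight :: "real \<Rightarrow> ('a::euclidean_space \<Rightarrow> real) \<Rightarrow> bool" where
  "A_weight t w \<longleftrightarrow>
     w \<in> borel_measurable lebesgue \<and> (\<forall>x. 0 \<le> w x) \<and> (AE x in lebesgue. 0 < w x) \<and>
     (\<forall>a h. h > 0 \<longrightarrow>
        (\<integral>\<^sup>+ x\<in>cube a h. ennreal (w x) \<partial>lebesgue) \<noteq> \<infinity> \<and>
        (\<integral>\<^sup>+ x\<in>cube a h. ennreal (w x powr (-1/(t-1))) \<partial>lebesgue) \<noteq> \<infinity>) \<and>
     (\<exists>C. \<forall>a h. h > 0 \<longrightarrow>
        avg (cube a h) w * avg (cube a h) (\<lambda>x. w x powr (-1/(t-1))) powr (t-1) \<le> C)"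

definition expo :: "nat \<Rightarrow> (nat \<Rightarrow> real) \<Rightarrow> real" where
  "expo m p = 1 / (\<Sum>j<m. 1 / p j)"

definition nu :: "nat \<Rightarrow> (nat \<Rightarrow> 'a \<Rightarrow> real) \<Rightarrow> (nat \<Rightarrow> real) \<Rightarrow> 'a \<Rightarrow> real" where
  "nu m w p x = (\<Prod>j<m. w j x powr (expo m p / p j))"

end

(*
  Take theta small and put p_j = (1 - theta) / (1/r_j - theta/q_j) and
  u_j = w_j^(1 + eps_j) * v_j^(-eps_j) with eps_j = (theta/q_j) / (1/r_j - theta/q_j): then
  both interpolation identities hold by algebra, and p_j -> r_j, eps_j -> 0 as theta -> 0.
  The content is that u_j is again a Muckenhoupt weight, in A_{p_j/s_j}.

  By Hoelder's inequality the A_{P'} constant of w^(1 + eps) * v^(-eps) on a cube is bounded by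
  averages of w^(1 + delta) and of sigma^(1 + delta), sigma = w^(-1/(P-1)) the dual weight, and by
  the A_P and A_Q constants of w and v; for eps small and P' near P suitable Hoelder exponents
  exist as soon as w and sigma satisfy reverse Hoelder inequalities. These hold for every A_t
  weight: the A_t condition makes subsets of at most half a cube carry at most a fixed fraction
  (1 - beta) of its weight, a good-lambda inequality for the Calderon-Zygmund stopping-time sets
  then gives w({w > 2^((d+1)k) avg w} in Q) <= (1 - beta)^k w(Q), and summing over the levels
  bounds the integral of w^(1 + delta) over Q for small delta.
*)
theory Submission
  imports Defs
begin

section \<open>Dyadic cubes\<close>

lemma mem_cube: "x \<in> cube a h \<longleftrightarrow> (\<forall>i\<in>Basis. a \<bullet> i \<le> x \<bullet> i \<and> x \<bullet> i \<le> a \<bullet> i + h)"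
  by (auto simp: cube_def mem_box inner_add_left)

lemma sets_cube [measurable]: "cube a h \<in> sets lebesgue"
  by (simp add: cube_def)

lemma emeasure_cube:
  fixes a :: "'a::euclidean_space"
  assumes "0 \<le> h"
  shows "emeasure lebesgue (cube a h) = ennreal (h ^ DIM('a))"
  using assms by (simp add: cube_def emeasure_lborel_cbox_eq inner_add_left)

text \<open>The \<open>2^DIM('a)\<close> dyadic children of \<open>cube a h\<close> are the cubes
  \<open>cube (dyadic_child a h S) (h/2)\<close>, \<open>S \<subseteq> Basis\<close>, shifted by \<open>h/2\<close>
  in the directions of \<open>S\<close>.\<close>
definition dyadic_child :: "'a::euclidean_space \<Rightarrow> real \<Rightarrow> 'a set \<Rightarrow> 'a" where
  "dyadic_child a h S = a + (h/2) *\<^sub>R (\<Sum>i\<in>S. i)"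

lemma inner_dyadic_child:
  assumes "S \<subseteq> Basis" "i \<in> Basis"
  shows "dyadic_child a h S \<bullet> i = a \<bullet> i + (if i \<in> S then h/2 else 0)"
proof -
  have "finite S" using assms(1) finite_Basis finite_subset by blast
  have "(\<Sum>j\<in>S. j) \<bullet> i = (\<Sum>j\<in>S. if j = i then 1 else 0)"
    unfolding inner_sum_left by (rule sum.cong) (use assms in \<open>auto simp: inner_Basis\<close>)
  also have "\<dots> = (if i \<in> S then 1 else 0)" using \<open>finite S\<close> by (simp add: sum.delta)
  finally show ?thesis by (simp add: dyadic_child_def inner_add_left)
qed

lemma cube_eq_Union_dyadic_children:
  assumes "0 \<le> h"
  shows "cube a h = (\<Union>S\<in>Pow Basis. cube (dyadic_child a h S) (h/2))"
proof
  show "cube a h \<subseteq> (\<Union>S\<in>Pow Basis. cube (dyadic_child a h S) (h/2))"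
  proof
    fix x assume x: "x \<in> cube a h"
    define S where "S = {i\<in>Basis. a \<bullet> i + h/2 \<le> x \<bullet> i}"
    have "x \<in> cube (dyadic_child a h S) (h/2)"
      using x unfolding mem_cube by (auto simp: inner_dyadic_child S_def)
    then show "x \<in> (\<Union>S\<in>Pow Basis. cube (dyadic_child a h S) (h/2))"
      by (auto simp: S_def)
  qed
next
  show "(\<Union>S\<in>Pow Basis. cube (dyadic_child a h S) (h/2)) \<subseteq> cube a h"
    using assms by (auto simp: mem_cube inner_dyadic_child split: if_splits; fastforce)
qed

lemma dyadic_child_subset:
  assumes "0 \<le> h" "S \<subseteq> Basis"
  shows "cube (dyadic_child a h S) (h/2) \<subseteq> cube a h"
  using cube_eq_Union_dyadic_children[OF assms(1), of a] assms(2) by blast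

lemma dyadic_children_overlap:
  assumes "S \<subseteq> Basis" "T \<subseteq> Basis" "S \<noteq> T"
    and "x \<in> cube (dyadic_child a h S) (h/2)" "x \<in> cube (dyadic_child a h T) (h/2)"
  shows "\<exists>i\<in>Basis. x \<bullet> i = a \<bullet> i + h/2"
proof -
  obtain i where i: "i \<in> S \<and> i \<notin> T \<or> i \<in> T \<and> i \<notin> S" using assms(3) by blast
  then have i_Basis: "i \<in> Basis" using assms(1,2) by blast
  have "dyadic_child a h S \<bullet> i \<le> x \<bullet> i \<and> x \<bullet> i \<le> dyadic_child a h S \<bullet> i + h/2"
    "dyadic_child a h T \<bullet> i \<le> x \<bullet> i \<and> x \<bullet> i \<le> dyadic_child a h T \<bullet> i + h/2"
    using assms(4,5) i_Basis by (simp_all add: mem_cube)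
  then show ?thesis using i i_Basis assms(1,2)
    by (intro bexI[of _ i]) (auto simp: inner_dyadic_child)
qed

text \<open>The children overlap only on the hyperplanes through the centre, a null set.\<close>
lemma nn_integral_Union_dyadic_children:
  fixes f :: "'a::euclidean_space \<Rightarrow> ennreal"
  assumes f: "f \<in> borel_measurable lebesgue"
    and X: "\<And>S. S \<subseteq> Basis \<Longrightarrow> X S \<in> sets lebesgue \<and> X S \<subseteq> cube (dyadic_child a h S) (h/2)"
  shows "(\<integral>\<^sup>+x\<in>(\<Union>S\<in>Pow Basis. X S). f x \<partial>lebesgue) = (\<Sum>S\<in>Pow Basis. \<integral>\<^sup>+x\<in>X S. f x \<partial>lebesgue)"
proof -
  define N where "N = (\<Union>i\<in>Basis. {x::'a. i \<bullet> x = a \<bullet> i + h/2})"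
  have "negligible N" unfolding N_def
    by (rule negligible_Union) (auto intro!: negligible_hyperplane simp: nonzero_Basis)
  then have "AE x in lebesgue. x \<notin> N"
    by (intro AE_not_in) (simp add: negligible_iff_null_sets)
  then have "AE x in lebesgue. f x * indicator (\<Union>S\<in>Pow Basis. X S) x
      = (\<Sum>S\<in>Pow Basis. f x * indicator (X S) x)"
  proof eventually_elim
    case (elim x)
    show ?case
    proof (cases "\<exists>S\<in>Pow Basis. x \<in> X S")
      case True
      then obtain S where S: "S \<subseteq> Basis" "x \<in> X S" by auto
      have unique: "T = S" if "T \<subseteq> Basis" "x \<in> X T" for T
        using dyadic_children_overlap[of T S x a h] X S elim that by (auto simp: N_def inner_commute)
      have "(\<Sum>T\<in>Pow Basis. f x * indicator (X T) x)
          = f x * indicator (X S) x + (\<Sum>T\<in>Pow Basis - {S}. f x * indicator (X T) x)"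
        using S by (intro sum.remove) auto
      also have "(\<Sum>T\<in>Pow Basis - {S}. f x * indicator (X T) x) = 0"
        using unique by (intro sum.neutral) (auto simp: indicator_def)
      finally have "(\<Sum>T\<in>Pow Basis. f x * indicator (X T) x) = f x * indicator (X S) x"
        by simp
      then show ?thesis using S by (auto simp: indicator_def)
    qed (auto simp: indicator_def)
  qed
  then have "(\<integral>\<^sup>+x\<in>(\<Union>S\<in>Pow Basis. X S). f x \<partial>lebesgue)
      = (\<integral>\<^sup>+x. (\<Sum>S\<in>Pow Basis. f x * indicator (X S) x) \<partial>lebesgue)"
    by (rule nn_integral_cong_AE)
  also have "\<dots> = (\<Sum>S\<in>Pow Basis. \<integral>\<^sup>+x\<in>X S. f x \<partial>lebesgue)"
    by (rule nn_integral_sum)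
      (use f X in \<open>auto intro!: borel_measurable_times_ennreal borel_measurable_indicator\<close>)
  finally show ?thesis .
qed

section \<open>Hoelder and Jensen inequalities\<close>

lemma nn_integral_mult_le_Holder:
  fixes f g :: "'b \<Rightarrow> real"
  assumes [measurable]: "f \<in> borel_measurable M" "g \<in> borel_measurable M"
    and f_nonneg: "\<And>x. 0 \<le> f x" and g_nonneg: "\<And>x. 0 \<le> g x"
    and p: "1 < p" and q: "q = p/(p-1)"
    and A: "(\<integral>\<^sup>+x. ennreal (f x powr p) \<partial>M) = ennreal A" "0 \<le> A"
    and B: "(\<integral>\<^sup>+x. ennreal (g x powr q) \<partial>M) = ennreal B" "0 \<le> B"
  shows "(\<integral>\<^sup>+x. ennreal (f x * g x) \<partial>M) \<le> ennreal (A powr (1/p) * B powr (1/q))"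
proof (cases "A = 0 \<or> B = 0")
  case True
  then have "(\<integral>\<^sup>+x. ennreal (f x powr p) \<partial>M) = 0 \<or> (\<integral>\<^sup>+x. ennreal (g x powr q) \<partial>M) = 0"
    using A B by auto
  then have "AE x in M. ennreal (f x * g x) = 0"
  proof
    assume "(\<integral>\<^sup>+x. ennreal (f x powr p) \<partial>M) = 0"
    then have "AE x in M. ennreal (f x powr p) = 0" by (subst (asm) nn_integral_0_iff_AE) auto
    then show ?thesis by eventually_elim (use f_nonneg in auto)
  next
    assume "(\<integral>\<^sup>+x. ennreal (g x powr q) \<partial>M) = 0"
    then have "AE x in M. ennreal (g x powr q) = 0" by (subst (asm) nn_integral_0_iff_AE) auto
    then show ?thesis by eventually_elim (use g_nonneg in auto)
  qed
  then show ?thesis by (subst nn_integral_0_iff_AE[THEN iffD2]) auto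
next
  case False
  then have A_pos: "0 < A" and B_pos: "0 < B" using A B by auto
  have q1: "1 < q" using p unfolding q by (subst less_divide_eq_1_pos) auto
  have pq: "1/p + 1/q = 1" using p unfolding q by (simp add: field_simps)
  define \<alpha> where "\<alpha> = A powr (1/p)"
  define \<beta> where "\<beta> = B powr (1/q)"
  have \<alpha>_pos: "0 < \<alpha>" and \<beta>_pos: "0 < \<beta>" using A_pos B_pos by (auto simp: \<alpha>_def \<beta>_def)
  have \<alpha>_p: "\<alpha> powr p = A" using A_pos p by (simp add: \<alpha>_def powr_powr)
  have \<beta>_q: "\<beta> powr q = B" using B_pos q1 by (simp add: \<beta>_def powr_powr)
  define c1 where "c1 = \<alpha> * \<beta> / (p * A)"
  define c2 where "c2 = \<alpha> * \<beta> / (q * B)"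
  have c_nonneg: "0 \<le> c1" "0 \<le> c2"
    using \<alpha>_pos \<beta>_pos A_pos B_pos p q1 by (auto simp: c1_def c2_def)
  have Young: "f x * g x \<le> c1 * f x powr p + c2 * g x powr q" for x
  proof -
    have "(f x / \<alpha>) * (g x / \<beta>) \<le> (f x / \<alpha>) powr p / p + (g x / \<beta>) powr q / q"
      by (rule Youngs_inequality[OF p q1 pq]) (use f_nonneg g_nonneg \<alpha>_pos \<beta>_pos in auto)
    also have "\<dots> = f x powr p / (p * A) + g x powr q / (q * B)"
      by (simp add: powr_divide \<alpha>_p \<beta>_q mult.commute)
    finally show ?thesis using \<alpha>_pos \<beta>_pos by (simp add: c1_def c2_def field_simps)
  qed
  have "(\<integral>\<^sup>+x. ennreal (f x * g x) \<partial>M)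
      \<le> (\<integral>\<^sup>+x. ennreal c1 * ennreal (f x powr p) + ennreal c2 * ennreal (g x powr q) \<partial>M)"
    using Young c_nonneg by (intro nn_integral_mono) (simp add: ennreal_leI flip: ennreal_mult ennreal_plus)
  also have "\<dots> = ennreal (c1 * A + c2 * B)"
    using c_nonneg A B by (simp add: nn_integral_add nn_integral_cmult ennreal_mult)
  also have "c1 * A + c2 * B = \<alpha> * \<beta> * (1/p + 1/q)"
    using A_pos B_pos p q1 by (simp add: c1_def c2_def field_simps)
  also have "\<dots> = A powr (1/p) * B powr (1/q)" using pq by (simp add: \<alpha>_def \<beta>_def)
  finally show ?thesis .
qed

lemma set_nn_integral_mult_le_Holder:
  fixes f g :: "'b \<Rightarrow> real"
  assumes [measurable]: "f \<in> borel_measurable M" "g \<in> borel_measurable M" "E \<in> sets M"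
    and f_nonneg: "\<And>x. 0 \<le> f x" and g_nonneg: "\<And>x. 0 \<le> g x"
    and p: "1 < p" and q: "q = p/(p-1)"
    and A: "(\<integral>\<^sup>+x\<in>E. ennreal (f x powr p) \<partial>M) = ennreal A" "0 \<le> A"
    and B: "(\<integral>\<^sup>+x\<in>E. ennreal (g x powr q) \<partial>M) = ennreal B" "0 \<le> B"
  shows "(\<integral>\<^sup>+x\<in>E. ennreal (f x * g x) \<partial>M) \<le> ennreal (A powr (1/p) * B powr (1/q))"
proof -
  have q1: "1 < q" using p unfolding q by (subst less_divide_eq_1_pos) auto
  have "ennreal ((f x * indicator E x) powr p) = ennreal (f x powr p) * indicator E x"
    "ennreal ((g x * indicator E x) powr q) = ennreal (g x powr q) * indicator E x"
    "ennreal ((f x * indicator E x) * (g x * indicator E x)) = ennreal (f x * g x) * indicator E x"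
    for x
    using p q1 by (auto simp: indicator_def)
  then show ?thesis
    using nn_integral_mult_le_Holder[OF _ _ _ _ p q, of "\<lambda>x. f x * indicator E x" M
        "\<lambda>x. g x * indicator E x"] f_nonneg g_nonneg A B
    by simp
qed

lemma set_nn_integral_powr_le:
  fixes f :: "'b \<Rightarrow> real"
  assumes [measurable]: "f \<in> borel_measurable M" "E \<in> sets M"
    and f_nonneg: "\<And>x. 0 \<le> f x" and \<gamma>: "0 < \<gamma>" "\<gamma> < 1"
    and F: "(\<integral>\<^sup>+x\<in>E. ennreal (f x) \<partial>M) = ennreal F" "0 \<le> F"
    and L: "emeasure M E = ennreal L" "0 \<le> L"
  shows "(\<integral>\<^sup>+x\<in>E. ennreal (f x powr \<gamma>) \<partial>M) \<le> ennreal (F powr \<gamma> * L powr (1 - \<gamma>))"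
proof -
  have p: "1 < 1/\<gamma>" and q: "1/(1-\<gamma>) = (1/\<gamma>) / (1/\<gamma> - 1)"
    using \<gamma> by (simp_all add: field_simps)
  have "(\<integral>\<^sup>+x\<in>E. ennreal (f x powr \<gamma> * 1) \<partial>M) \<le> ennreal (F powr \<gamma> * L powr (1 - \<gamma>))"
    using set_nn_integral_mult_le_Holder[OF _ _ _ _ _ p q, of "\<lambda>x. f x powr \<gamma>" M "\<lambda>_. 1" E]
      f_nonneg F L \<gamma> by (simp add: powr_powr)
  then show ?thesis by simp
qed

lemma avg_nonneg: "0 \<le> avg E f"
  by (simp add: avg_def)

lemma set_nn_integral_eq_avg:
  assumes E: "emeasure lebesgue E = ennreal L" "0 < L"
    and fin: "(\<integral>\<^sup>+x\<in>E. ennreal (f x) \<partial>lebesgue) \<noteq> \<infinity>"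
  shows "(\<integral>\<^sup>+x\<in>E. ennreal (f x) \<partial>lebesgue) = ennreal (L * avg E f)"
proof -
  have "measure lebesgue E = L" using E by (simp add: measure_def)
  then show ?thesis using E fin
    by (cases "\<integral>\<^sup>+x\<in>E. ennreal (f x) \<partial>lebesgue") (auto simp: avg_def)
qed

lemma avg_le_if_set_nn_integral_le:
  assumes E: "emeasure lebesgue E = ennreal L" "0 < L"
    and le: "(\<integral>\<^sup>+x\<in>E. ennreal (f x) \<partial>lebesgue) \<le> ennreal (L * B)" and "0 \<le> B"
  shows "(\<integral>\<^sup>+x\<in>E. ennreal (f x) \<partial>lebesgue) \<noteq> \<infinity>" "avg E f \<le> B"
proof -
  show fin: "(\<integral>\<^sup>+x\<in>E. ennreal (f x) \<partial>lebesgue) \<noteq> \<infinity>"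
    using le by (auto simp: top_unique)
  have "ennreal (L * avg E f) \<le> ennreal (L * B)"
    using le set_nn_integral_eq_avg[OF E fin] by simp
  then have "L * avg E f \<le> L * B"
    using E \<open>0 \<le> B\<close> by (subst (asm) ennreal_le_iff) auto
  then show "avg E f \<le> B" using E by simp
qed

lemma avg_mult_le_Holder:
  fixes f g :: "'a::euclidean_space \<Rightarrow> real"
  assumes [measurable]: "f \<in> borel_measurable lebesgue" "g \<in> borel_measurable lebesgue" "E \<in> sets lebesgue"
    and f_nonneg: "\<And>x. 0 \<le> f x" and g_nonneg: "\<And>x. 0 \<le> g x"
    and E: "emeasure lebesgue E = ennreal L" "0 < L"
    and p: "1 < p" and q: "q = p/(p-1)"
    and fin: "(\<integral>\<^sup>+x\<in>E. ennreal (f x powr p) \<partial>lebesgue) \<noteq> \<infinity>"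
      "(\<integral>\<^sup>+x\<in>E. ennreal (g x powr q) \<partial>lebesgue) \<noteq> \<infinity>"
  shows "(\<integral>\<^sup>+x\<in>E. ennreal (f x * g x) \<partial>lebesgue) \<noteq> \<infinity>"
    and "avg E (\<lambda>x. f x * g x)
      \<le> avg E (\<lambda>x. f x powr p) powr (1/p) * avg E (\<lambda>x. g x powr q) powr (1/q)"
proof -
  define A where "A = avg E (\<lambda>x. f x powr p)"
  define B where "B = avg E (\<lambda>x. g x powr q)"
  have pq: "1/p + 1/q = 1" using p unfolding q by (simp add: field_simps)
  have "(\<integral>\<^sup>+x\<in>E. ennreal (f x * g x) \<partial>lebesgue) \<le> ennreal ((L * A) powr (1/p) * (L * B) powr (1/q))"
    using set_nn_integral_eq_avg[OF E fin(1)] set_nn_integral_eq_avg[OF E fin(2)] E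
    by (intro set_nn_integral_mult_le_Holder[OF _ _ _ f_nonneg g_nonneg p q])
      (auto simp: A_def B_def avg_nonneg)
  also have "(L * A) powr (1/p) * (L * B) powr (1/q) = L powr (1/p + 1/q) * (A powr (1/p) * B powr (1/q))"
    using E by (simp add: powr_mult powr_add avg_nonneg A_def B_def)
  also have "\<dots> = L * (A powr (1/p) * B powr (1/q))" using pq E by simp
  finally have "(\<integral>\<^sup>+x\<in>E. ennreal (f x * g x) \<partial>lebesgue) \<le> ennreal (L * (A powr (1/p) * B powr (1/q)))" .
  from avg_le_if_set_nn_integral_le[OF E this]
  show "(\<integral>\<^sup>+x\<in>E. ennreal (f x * g x) \<partial>lebesgue) \<noteq> \<infinity>"
    and "avg E (\<lambda>x. f x * g x) \<le> A powr (1/p) * B powr (1/q)"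
    by auto
qed

lemma avg_powr_le:
  fixes f :: "'a::euclidean_space \<Rightarrow> real"
  assumes [measurable]: "f \<in> borel_measurable lebesgue" "E \<in> sets lebesgue"
    and f_nonneg: "\<And>x. 0 \<le> f x" and \<gamma>: "0 < \<gamma>" "\<gamma> < 1"
    and E: "emeasure lebesgue E = ennreal L" "0 < L"
    and fin: "(\<integral>\<^sup>+x\<in>E. ennreal (f x) \<partial>lebesgue) \<noteq> \<infinity>"
  shows "(\<integral>\<^sup>+x\<in>E. ennreal (f x powr \<gamma>) \<partial>lebesgue) \<noteq> \<infinity>"
    and "avg E (\<lambda>x. f x powr \<gamma>) \<le> avg E f powr \<gamma>"
proof -
  define F where "F = avg E f"
  have "(\<integral>\<^sup>+x\<in>E. ennreal (f x powr \<gamma>) \<partial>lebesgue) \<le> ennreal ((L * F) powr \<gamma> * L powr (1 - \<gamma>))"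
    using set_nn_integral_eq_avg[OF E fin] E
    by (intro set_nn_integral_powr_le[OF _ _ f_nonneg \<gamma>]) (auto simp: F_def avg_nonneg)
  also have "(L * F) powr \<gamma> * L powr (1 - \<gamma>) = (L powr \<gamma> * L powr (1 - \<gamma>)) * F powr \<gamma>"
    using E by (simp add: powr_mult mult_ac F_def avg_nonneg)
  also have "L powr \<gamma> * L powr (1 - \<gamma>) = L"
    using E by (simp flip: powr_add)
  finally have "(\<integral>\<^sup>+x\<in>E. ennreal (f x powr \<gamma>) \<partial>lebesgue) \<le> ennreal (L * F powr \<gamma>)" .
  from avg_le_if_set_nn_integral_le[OF E this]
  show "(\<integral>\<^sup>+x\<in>E. ennreal (f x powr \<gamma>) \<partial>lebesgue) \<noteq> \<infinity>"
    and "avg E (\<lambda>x. f x powr \<gamma>) \<le> F powr \<gamma>"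
    by auto
qed

section \<open>Muckenhoupt weights\<close>

definition mass :: "('a::euclidean_space \<Rightarrow> real) \<Rightarrow> 'a set \<Rightarrow> ennreal" where
  "mass g X = (\<integral>\<^sup>+x\<in>X. ennreal (g x) \<partial>lebesgue)"

lemma mass_empty [simp]: "mass g {} = 0"
  by (simp add: mass_def)

lemma mass_mono: "X \<subseteq> Y \<Longrightarrow> mass g X \<le> mass g Y"
  unfolding mass_def by (intro nn_integral_mono) (auto simp: indicator_def)

lemma mass_Un:
  assumes [measurable]: "g \<in> borel_measurable lebesgue" "X \<in> sets lebesgue" "Y \<in> sets lebesgue"
    and "X \<inter> Y = {}"
  shows "mass g (X \<union> Y) = mass g X + mass g Y"
proof -
  have "mass g (X \<union> Y) = (\<integral>\<^sup>+x. ennreal (g x) * indicator X x + ennreal (g x) * indicator Y x \<partial>lebesgue)"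
    unfolding mass_def using \<open>X \<inter> Y = {}\<close> by (intro nn_integral_cong) (auto simp: indicator_def)
  also have "\<dots> = mass g X + mass g Y"
    unfolding mass_def by (rule nn_integral_add) auto
  finally show ?thesis .
qed

lemma mass_UN_incseq:
  assumes [measurable]: "g \<in> borel_measurable lebesgue" "\<And>N. X N \<in> sets lebesgue"
    and "incseq X"
  shows "mass g (\<Union>N. X N) = (SUP N. mass g (X N))"
proof -
  define D where "D = density lebesgue (\<lambda>x. ennreal (g x))"
  have mass_eq: "mass g Y = emeasure D Y" if "Y \<in> sets lebesgue" for Y
    using that by (simp add: D_def emeasure_density mass_def)
  have "(SUP N. emeasure D (X N)) = emeasure D (\<Union>N. X N)"
    using assms by (intro SUP_emeasure_incseq) (auto simp: D_def)
  then show ?thesis by (simp add: mass_eq)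
qed

lemma A_weightD:
  assumes "A_weight t w"
  shows "w \<in> borel_measurable lebesgue" "\<And>x. 0 \<le> w x" "AE x in lebesgue. 0 < w x"
    "\<And>a h. 0 < h \<Longrightarrow> (\<integral>\<^sup>+ x\<in>cube a h. ennreal (w x) \<partial>lebesgue) \<noteq> \<infinity>"
    "\<And>a h. 0 < h \<Longrightarrow> (\<integral>\<^sup>+ x\<in>cube a h. ennreal (w x powr (-1/(t-1))) \<partial>lebesgue) \<noteq> \<infinity>"
    "\<exists>C. \<forall>a h. h > 0 \<longrightarrow>
        avg (cube a h) w * avg (cube a h) (\<lambda>x. w x powr (-1/(t-1))) powr (t-1) \<le> C"
  using assms unfolding A_weight_def by auto

lemma A_weight_dual:
  fixes w :: "'a::euclidean_space \<Rightarrow> real"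
  assumes Aw: "A_weight t w" and t: "1 < t"
  shows "A_weight (t / (t - 1)) (\<lambda>x. w x powr (-1/(t-1)))"
proof -
  note [measurable] = A_weightD(1)[OF Aw]
  obtain C where C: "\<And>a h. h > 0 \<Longrightarrow>
        avg (cube a h) w * avg (cube a h) (\<lambda>x. w x powr (-1/(t-1))) powr (t-1) \<le> C"
    using A_weightD(6)[OF Aw] by blast
  have dual_exponent: "-1 / (t / (t - 1) - 1) = -(t-1)"
    using t by (simp add: field_simps)
  have "(-1/(t-1)) * (-(t-1)) = 1" using t by (simp add: field_simps)
  then have dual_dual: "(w x powr (-1/(t-1))) powr (-(t-1)) = w x" for x
    using A_weightD(2)[OF Aw, of x] by (simp add: powr_powr)
  have dual_A_condition: "\<exists>C'. \<forall>a h. 0 < h \<longrightarrow>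
      avg (cube a h) (\<lambda>x. w x powr (-1/(t-1))) * avg (cube a h) w powr (1/(t-1)) \<le> C'"
  proof (intro exI allI impI)
    fix a :: 'a and h :: real assume h: "0 < h"
    define A where "A = avg (cube a h) w"
    define S where "S = avg (cube a h) (\<lambda>x. w x powr (-1/(t-1)))"
    have "(A * S powr (t-1)) powr (1/(t-1)) \<le> (max C 0) powr (1/(t-1))"
      using C[OF h] t by (intro powr_mono2) (auto simp: A_def S_def avg_nonneg le_max_iff_disj)
    moreover have "(A * S powr (t-1)) powr (1/(t-1)) = S * A powr (1/(t-1))"
      using t by (simp add: powr_mult powr_powr mult.commute S_def avg_nonneg)
    ultimately show "S * A powr (1/(t-1)) \<le> (max C 0) powr (1/(t-1))" by simp
  qed
  show ?thesis
    unfolding A_weight_def dual_exponent dual_dual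
  proof (intro conjI allI impI)
    have "t / (t - 1) - 1 = 1/(t-1)" using t by (simp add: field_simps)
    then show "\<exists>C'. \<forall>a h. 0 < h \<longrightarrow>
        avg (cube a h) (\<lambda>x. w x powr (-1/(t-1))) * avg (cube a h) w powr (t / (t - 1) - 1) \<le> C'"
      using dual_A_condition by simp
    show "AE x in lebesgue. 0 < w x powr (-1/(t-1))"
      using A_weightD(3)[OF Aw] by eventually_elim simp
    show "(\<integral>\<^sup>+ x\<in>cube a h. ennreal (w x powr (-1/(t-1))) \<partial>lebesgue) \<noteq> \<infinity>"
      "(\<integral>\<^sup>+ x\<in>cube a h. ennreal (w x) \<partial>lebesgue) \<noteq> \<infinity>" if "0 < h" for a h
      using A_weightD(4,5)[OF Aw that] by simp_all
  qed (use A_weightD(1,2)[OF Aw] in auto)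
qed

lemma measure_powr_le_mass_mult_dual_mass:
  fixes w :: "'a::euclidean_space \<Rightarrow> real"
  assumes [measurable]: "w \<in> borel_measurable lebesgue" "E \<in> sets lebesgue"
    and w_nonneg: "\<And>x. 0 \<le> w x" and w_pos: "AE x in lebesgue. 0 < w x" and t: "1 < t"
    and wE: "mass w E = ennreal wE" "0 \<le> wE"
    and sE: "mass (\<lambda>x. w x powr (-1/(t-1))) E = ennreal sE" "0 \<le> sE"
  shows "measure lebesgue E powr t \<le> wE * sE powr (t-1)"
proof -
  have "AE x in lebesgue. ennreal (w x powr (1/t) * w x powr (-1/t)) * indicator E x = indicator E x"
    using w_pos by eventually_elim (simp flip: powr_add)
  then have "emeasure lebesgue E = (\<integral>\<^sup>+x\<in>E. ennreal (w x powr (1/t) * w x powr (-1/t)) \<partial>lebesgue)"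
    by (simp cong: nn_integral_cong_AE)
  also have "\<dots> \<le> ennreal (wE powr (1/t) * sE powr (1/(t/(t-1))))"
  proof (rule set_nn_integral_mult_le_Holder[OF _ _ _ _ _ t refl])
    show "(\<integral>\<^sup>+x\<in>E. ennreal ((w x powr (1/t)) powr t) \<partial>lebesgue) = ennreal wE"
      using t w_nonneg wE by (simp add: powr_powr mass_def)
    have "(w x powr (-1/t)) powr (t/(t-1)) = w x powr (-1/(t-1))" for x
      using t by (simp add: powr_powr)
    then show "(\<integral>\<^sup>+x\<in>E. ennreal ((w x powr (-1/t)) powr (t/(t-1))) \<partial>lebesgue) = ennreal sE"
      using sE by (simp add: mass_def)
  qed (use wE sE in auto)
  finally have "measure lebesgue E \<le> wE powr (1/t) * sE powr ((t-1)/t)"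
    by (simp add: measure_def enn2real_leI)
  then have "measure lebesgue E powr t \<le> (wE powr (1/t) * sE powr ((t-1)/t)) powr t"
    using t by (intro powr_mono2) auto
  also have "\<dots> = wE * sE powr (t-1)"
    using t wE sE by (simp add: powr_mult powr_powr)
  finally show ?thesis .
qed

lemma A_weight_measure_ratio:
  fixes w :: "'a::euclidean_space \<Rightarrow> real"
  assumes Aw: "A_weight t w" and t: "1 < t"
  obtains C where "0 < C"
    "\<And>c l E. 0 < l \<Longrightarrow> E \<in> sets lebesgue \<Longrightarrow> E \<subseteq> cube c l \<Longrightarrow>
       ennreal ((measure lebesgue E / l ^ DIM('a)) powr t) * mass w (cube c l) \<le> ennreal C * mass w E"
proof -
  note [measurable] = A_weightD(1)[OF Aw]
  define \<sigma> where "\<sigma> x = w x powr (-1/(t-1))" for x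
  obtain C0 where C0: "\<And>a h. h > 0 \<Longrightarrow> avg (cube a h) w * avg (cube a h) \<sigma> powr (t-1) \<le> C0"
    using A_weightD(6)[OF Aw] unfolding \<sigma>_def by blast
  define C where "C = max C0 1"
  show thesis
  proof (rule that)
    show "0 < C" by (simp add: C_def)
    fix c :: 'a and l E assume l: "0 < l" and [measurable]: "E \<in> sets lebesgue" and ER: "E \<subseteq> cube c l"
    define L where "L = l ^ DIM('a)"
    have L: "emeasure lebesgue (cube c l) = ennreal L" "0 < L"
      using emeasure_cube[of l c] l unfolding L_def by auto
    define wR where "wR = avg (cube c l) w"
    define sR where "sR = avg (cube c l) \<sigma>"
    have wR: "mass w (cube c l) = ennreal (L * wR)"
      unfolding mass_def wR_def by (rule set_nn_integral_eq_avg[OF L A_weightD(4)[OF Aw l]])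
    have sR: "mass \<sigma> (cube c l) = ennreal (L * sR)"
      unfolding mass_def sR_def \<sigma>_def by (rule set_nn_integral_eq_avg[OF L A_weightD(5)[OF Aw l]])
    have wR_nonneg: "0 \<le> wR" and sR_nonneg: "0 \<le> sR" by (simp_all add: wR_def sR_def avg_nonneg)
    obtain wE where wE: "mass w E = ennreal wE" "0 \<le> wE"
      using mass_mono[OF ER, of w] wR L wR_nonneg by (auto simp: le_ennreal_iff)
    obtain sE where sE: "mass \<sigma> E = ennreal sE" "0 \<le> sE" "sE \<le> L * sR"
      using mass_mono[OF ER, of \<sigma>] sR L sR_nonneg by (auto simp: le_ennreal_iff)
    have "measure lebesgue E powr t \<le> wE * sE powr (t-1)"
      using sE unfolding \<sigma>_def
      by (intro measure_powr_le_mass_mult_dual_mass[OF _ _ A_weightD(2,3)[OF Aw] t wE]) auto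
    also have "\<dots> \<le> wE * (L * sR) powr (t-1)"
      using t sE wE by (intro mult_left_mono powr_mono2) auto
    finally have mE: "measure lebesgue E powr t \<le> wE * (L powr (t-1) * sR powr (t-1))"
      using L sR_nonneg by (simp add: powr_mult)
    have A_t: "wR * sR powr (t-1) \<le> C"
      using C0[OF l, of c] by (simp add: C_def wR_def sR_def)
    have "(measure lebesgue E / L) powr t * (L * wR) = measure lebesgue E powr t * wR * (L / L powr t)"
      using L by (simp add: powr_divide)
    also have "\<dots> \<le> wE * (L powr (t-1) * sR powr (t-1)) * wR * (L / L powr t)"
      using mE L wR_nonneg by (intro mult_right_mono) auto
    also have "\<dots> = wE * (wR * sR powr (t-1))"
      using L by (simp add: powr_diff field_simps)
    also have "\<dots> \<le> wE * C"
      using A_t wE by (intro mult_left_mono) auto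
    finally have "ennreal ((measure lebesgue E / L) powr t * (L * wR)) \<le> ennreal (C * wE)"
      by (intro ennreal_leI) (simp add: mult.commute)
    then show "ennreal ((measure lebesgue E / l ^ DIM('a)) powr t) * mass w (cube c l) \<le> ennreal C * mass w E"
      using wR wE L wR_nonneg \<open>0 < C\<close> by (simp add: L_def ennreal_mult)
  qed
qed

lemma A_weight_mass_small_subset:
  fixes w :: "'a::euclidean_space \<Rightarrow> real"
  assumes Aw: "A_weight t w" and t: "1 < t"
  obtains \<beta> where "0 < \<beta>" "\<beta> < 1"
    "\<And>c l F. 0 < l \<Longrightarrow> F \<in> sets lebesgue \<Longrightarrow> F \<subseteq> cube c l \<Longrightarrow>
       emeasure lebesgue F \<le> ennreal (l ^ DIM('a) / 2) \<Longrightarrow>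
       mass w F \<le> ennreal (1 - \<beta>) * mass w (cube c l)"
proof -
  note [measurable] = A_weightD(1)[OF Aw]
  obtain C where "0 < C" and ratio: "\<And>c l E. 0 < l \<Longrightarrow> E \<in> sets lebesgue \<Longrightarrow> E \<subseteq> cube c l \<Longrightarrow>
       ennreal ((measure lebesgue E / l ^ DIM('a)) powr t) * mass w (cube c l) \<le> ennreal C * mass w E"
    using A_weight_measure_ratio[OF Aw t] by blast
  define \<beta> where "\<beta> = 2 powr (-t) / max C 1"
  have "2 powr (-t) < 1" using t by (simp add: powr_minus_divide)
  then have \<beta>: "0 < \<beta>" "\<beta> < 1" by (auto simp: \<beta>_def divide_less_eq)
  show thesis
  proof (rule that[OF \<beta>])
    fix c :: 'a and l F
    assume l: "0 < l" and [measurable]: "F \<in> sets lebesgue" and FR: "F \<subseteq> cube c l"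
      and F_small: "emeasure lebesgue F \<le> ennreal (l ^ DIM('a) / 2)"
    define L where "L = l ^ DIM('a)"
    define E where "E = cube c l - F"
    have [measurable]: "E \<in> sets lebesgue" by (simp add: E_def)
    have L: "emeasure lebesgue (cube c l) = ennreal L" "0 < L"
      using emeasure_cube[of l c] l unfolding L_def by auto
    obtain mF where mF: "emeasure lebesgue F = ennreal mF" "0 \<le> mF" "mF \<le> L / 2"
      using F_small L by (auto simp: le_ennreal_iff L_def)
    have "emeasure lebesgue E = ennreal (L - mF)"
      unfolding E_def using FR L mF by (subst emeasure_Diff) (auto simp: ennreal_minus)
    then have half: "1/2 \<le> measure lebesgue E / L"
      using mF L by (simp add: measure_def field_simps)
    obtain wR where wR: "mass w (cube c l) = ennreal wR" "0 \<le> wR"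
      using A_weightD(4)[OF Aw l, of c] unfolding mass_def by (cases rule: ennreal_cases) auto
    have split: "mass w (cube c l) = mass w F + mass w E"
      using FR by (subst mass_Un[symmetric]) (auto simp: E_def Un_absorb1)
    then obtain wF wE where wF: "mass w F = ennreal wF" "0 \<le> wF"
      and wE: "mass w E = ennreal wE" "0 \<le> wE" and "wR = wF + wE"
      using wR by (cases "mass w F"; cases "mass w E") (auto simp flip: ennreal_plus)
    have "(1/2) powr t \<le> (measure lebesgue E / L) powr t"
      using half t by (intro powr_mono2) auto
    then have "2 powr (-t) \<le> (measure lebesgue E / L) powr t"
      by (simp add: powr_minus_divide powr_divide)
    then have "ennreal (2 powr (-t) * wR) \<le> ennreal ((measure lebesgue E / L) powr t) * ennreal wR"
      using wR by (simp add: ennreal_mult'' ennreal_leI mult_right_mono)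
    also have "\<dots> \<le> ennreal C * mass w E"
      using ratio[OF l, of E c] wR by (auto simp: E_def L_def)
    also have "\<dots> = ennreal (C * wE)"
      using wE \<open>0 < C\<close> by (simp add: ennreal_mult)
    finally have "ennreal (2 powr (-t) * wR) \<le> ennreal (C * wE)" .
    then have "2 powr (-t) * wR \<le> C * wE"
      by (rule ennreal_le_iff[THEN iffD1, rotated]) (use \<open>0 < C\<close> wE in simp)
    also have "\<dots> \<le> max C 1 * wE"
      using wE by (intro mult_right_mono) auto
    finally have "2 powr (-t) * wR / max C 1 \<le> wE"
      by (simp add: pos_divide_le_eq mult.commute)
    then have "\<beta> * wR \<le> wE" by (simp add: \<beta>_def)
    then have "wF \<le> (1 - \<beta>) * wR" using \<open>wR = wF + wE\<close> by (simp add: algebra_simps)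
    then have "ennreal wF \<le> ennreal ((1 - \<beta>) * wR)" by (rule ennreal_leI)
    then show "mass w F \<le> ennreal (1 - \<beta>) * mass w (cube c l)"
      using wF wR \<beta> by (simp add: ennreal_mult)
  qed
qed

section \<open>The reverse Hoelder inequality\<close>

lemma mass_Union_dyadic_children:
  assumes [measurable]: "g \<in> borel_measurable lebesgue"
    and "\<And>S. S \<subseteq> Basis \<Longrightarrow> X S \<in> sets lebesgue \<and> X S \<subseteq> cube (dyadic_child a h S) (h/2)"
  shows "mass g (\<Union>S\<in>Pow Basis. X S) = (\<Sum>S\<in>Pow Basis. mass g (X S))"
  unfolding mass_def by (rule nn_integral_Union_dyadic_children) (use assms in auto)

lemma emeasure_Union_dyadic_children:
  assumes X: "\<And>S. S \<subseteq> Basis \<Longrightarrow> X S \<in> sets lebesgue \<and> X S \<subseteq> cube (dyadic_child a h S) (h/2)"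
  shows "emeasure lebesgue (\<Union>S\<in>Pow Basis. X S) = (\<Sum>S\<in>Pow Basis. emeasure lebesgue (X S))"
proof -
  have "(\<integral>\<^sup>+x\<in>(\<Union>S\<in>Pow Basis. X S). 1 \<partial>lebesgue) = (\<Sum>S\<in>Pow Basis. \<integral>\<^sup>+x\<in>X S. 1 \<partial>lebesgue)"
    by (rule nn_integral_Union_dyadic_children) (use X in auto)
  moreover have "(\<Union>S\<in>Pow Basis. X S) \<in> sets lebesgue" using X by auto
  ultimately show ?thesis using X by simp
qed

text \<open>Calderon-Zygmund stopping time, cut off after \<open>N\<close> generations: the union of the
  maximal dyadic subcubes of \<open>cube a h\<close> of generation at most \<open>N\<close> on which the
  average of \<open>g\<close> exceeds \<open>lam\<close>.\<close>
fun cz_set :: "nat \<Rightarrow> real \<Rightarrow> ('a::euclidean_space \<Rightarrow> real) \<Rightarrow> 'a \<Rightarrow> real \<Rightarrow> 'a set" where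
  "cz_set 0 lam g a h = (if lam < avg (cube a h) g then cube a h else {})"
| "cz_set (Suc N) lam g a h = (if lam < avg (cube a h) g then cube a h
      else (\<Union>S\<in>Pow Basis. cz_set N lam g (dyadic_child a h S) (h/2)))"

fun dyadic_hull :: "nat \<Rightarrow> 'a set \<Rightarrow> 'a::euclidean_space \<Rightarrow> real \<Rightarrow> 'a set" where
  "dyadic_hull 0 A a h = (if cube a h \<inter> A \<noteq> {} then cube a h else {})"
| "dyadic_hull (Suc N) A a h = (\<Union>S\<in>Pow Basis. dyadic_hull N A (dyadic_child a h S) (h/2))"

lemma cz_set_subset_cube_sets:
  assumes "0 \<le> h"
  shows "cz_set N lam g a h \<subseteq> cube a h \<and> cz_set N lam g a h \<in> sets lebesgue"
  using assms
proof (induction N arbitrary: a h)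
  case (Suc N)
  have "cz_set N lam g (dyadic_child a h S) (h/2) \<subseteq> cube a h" if "S \<subseteq> Basis" for S
    using Suc.IH[of "h/2" "dyadic_child a h S"] dyadic_child_subset[OF Suc.prems that, of a] Suc.prems
    by auto
  moreover have "cz_set N lam g (dyadic_child a h S) (h/2) \<in> sets lebesgue" for S
    using Suc.IH[of "h/2" "dyadic_child a h S"] Suc.prems by auto
  ultimately show ?case by auto
qed auto

lemma cz_set_subset_cube: "0 \<le> h \<Longrightarrow> cz_set N lam g a h \<subseteq> cube a h"
  using cz_set_subset_cube_sets by blast

lemma sets_cz_set: "0 \<le> h \<Longrightarrow> cz_set N lam g a h \<in> sets lebesgue"
  using cz_set_subset_cube_sets by blast

lemma cz_set_eq_cube: "lam < avg (cube a h) g \<Longrightarrow> cz_set N lam g a h = cube a h"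
  by (cases N) auto

lemma incseq_cz_set: "incseq (\<lambda>N. cz_set N lam g a h)"
proof (rule incseq_SucI)
  show "cz_set N lam g a h \<subseteq> cz_set (Suc N) lam g a h" for N
  proof (induction N arbitrary: a h)
    case (Suc N)
    show ?case
    proof (cases "lam < avg (cube a h) g")
      case False
      then show ?thesis using Suc.IH by (simp only: cz_set.simps if_False) blast
    qed simp
  qed auto
qed

lemma dyadic_hull_empty:
  assumes "0 \<le> h" "A \<inter> cube a h = {}"
  shows "dyadic_hull N A a h = {}"
  using assms
proof (induction N arbitrary: a h)
  case (Suc N)
  have "dyadic_hull N A (dyadic_child a h S) (h/2) = {}" if "S \<subseteq> Basis" for S
    using Suc.IH[of "h/2" "dyadic_child a h S"] dyadic_child_subset[OF Suc.prems(1) that, of a] Suc.prems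
    by auto
  then show ?case by auto
qed auto

lemma dyadic_hull_bounds:
  assumes "0 \<le> h"
  shows "A \<inter> cube a h \<subseteq> dyadic_hull N A a h \<and> dyadic_hull N A a h \<subseteq> cube a h
    \<and> dyadic_hull N A a h \<in> sets lebesgue"
  using assms
proof (induction N arbitrary: a h)
  case (Suc N)
  have IH: "A \<inter> cube (dyadic_child a h S) (h/2) \<subseteq> dyadic_hull N A (dyadic_child a h S) (h/2)"
    "dyadic_hull N A (dyadic_child a h S) (h/2) \<subseteq> cube (dyadic_child a h S) (h/2)"
    "dyadic_hull N A (dyadic_child a h S) (h/2) \<in> sets lebesgue" for S
    using Suc.IH[of "h/2" "dyadic_child a h S"] Suc.prems by auto
  have "A \<inter> cube a h \<subseteq> dyadic_hull (Suc N) A a h"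
  proof
    fix x assume "x \<in> A \<inter> cube a h"
    then obtain S where "S \<in> Pow Basis" "x \<in> A \<inter> cube (dyadic_child a h S) (h/2)"
      using cube_eq_Union_dyadic_children[OF Suc.prems, of a] by auto
    then show "x \<in> dyadic_hull (Suc N) A a h" using IH(1)[of S] by auto
  qed
  moreover have "dyadic_hull (Suc N) A a h \<subseteq> cube a h"
  proof
    fix x assume "x \<in> dyadic_hull (Suc N) A a h"
    then obtain S where S: "S \<subseteq> Basis" "x \<in> dyadic_hull N A (dyadic_child a h S) (h/2)" by auto
    then show "x \<in> cube a h" using IH(2)[of S] dyadic_child_subset[OF Suc.prems S(1), of a] by blast
  qed
  ultimately show ?case using IH(3) by auto
qed auto

lemma dyadic_hull_near:
  assumes "0 \<le> h" "y \<in> dyadic_hull N A a h"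
  shows "\<exists>z\<in>A. \<forall>i\<in>Basis. \<bar>y \<bullet> i - z \<bullet> i\<bar> \<le> h / 2 ^ N"
  using assms
proof (induction N arbitrary: a h)
  case 0
  then obtain z where z: "z \<in> A" "z \<in> cube a h" "y \<in> cube a h" by (auto split: if_splits)
  have "\<bar>y \<bullet> i - z \<bullet> i\<bar> \<le> h" if "i \<in> Basis" for i
  proof -
    have "a \<bullet> i \<le> z \<bullet> i" "z \<bullet> i \<le> a \<bullet> i + h" "a \<bullet> i \<le> y \<bullet> i" "y \<bullet> i \<le> a \<bullet> i + h"
      using z that by (auto simp: mem_cube)
    then show ?thesis by linarith
  qed
  then show ?case using z by auto
next
  case (Suc N)
  then obtain S where "y \<in> dyadic_hull N A (dyadic_child a h S) (h/2)" by auto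
  from Suc.IH[OF _ this] Suc.prems show ?case by simp
qed

lemma ennreal_mult_emeasure_cube:
  fixes a :: "'a::euclidean_space"
  assumes "0 < h" "0 \<le> lam"
  shows "ennreal lam * emeasure lebesgue (cube a h) = ennreal (h ^ DIM('a) * lam)"
  unfolding emeasure_cube[OF less_imp_le[OF assms(1)]] using assms by (simp add: ennreal_mult mult.commute)

lemma cube_subset_if_mem_box:
  fixes x :: "'a::euclidean_space"
  assumes "x \<in> box a (a + h *\<^sub>R One)"
  obtains m where "0 < m" "\<And>l. 0 \<le> l \<Longrightarrow> l \<le> m \<Longrightarrow> cube x l \<subseteq> cube a h"
proof
  define m where "m = (MIN i\<in>Basis. a \<bullet> i + h - x \<bullet> i)"
  show "0 < m" unfolding m_def
    using assms by (subst Min_gr_iff) (auto simp: mem_box inner_add_left)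
  fix l assume "0 \<le> l" "l \<le> m"
  then have "x \<bullet> i + l \<le> a \<bullet> i + h" if "i \<in> Basis" for i
    using Min_le[of "(\<lambda>i. a \<bullet> i + h - x \<bullet> i) ` Basis" "a \<bullet> i + h - x \<bullet> i"] that
    by (auto simp: m_def)
  moreover have "a \<bullet> i \<le> x \<bullet> i" if "i \<in> Basis" for i
    using assms that by (auto simp: mem_box inner_add_left)
  ultimately show "cube x l \<subseteq> cube a h"
    by (fastforce simp: mem_cube)
qed

lemma powr_one_plus_le_level_sum:
  fixes t b l0 \<delta> :: real
  assumes t: "0 \<le> t" and b: "1 < b" and l0: "0 < l0" and \<delta>: "0 < \<delta>"
  shows "ennreal (t powr (1 + \<delta>)) \<le> ennreal (l0 powr \<delta> * t)
    + (\<Sum>k. ennreal (if b ^ k * l0 < t then (b ^ Suc k * l0) powr \<delta> * t else 0))"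
proof -
  have split: "t powr (1 + \<delta>) = t powr \<delta> * t" using t by (simp add: powr_add mult.commute)
  show ?thesis
  proof (cases "t \<le> l0")
    case True
    then have "t powr (1 + \<delta>) \<le> l0 powr \<delta> * t"
      unfolding split using t \<delta> by (intro mult_right_mono powr_mono2) auto
    then show ?thesis by (simp add: add_increasing2 ennreal_leI)
  next
    case False
    obtain n where "t / l0 < b ^ n" using real_arch_pow[OF b] by blast
    then have "\<exists>j. t \<le> b ^ j * l0" using l0 by (auto simp: divide_less_eq intro: less_imp_le)
    define j where "j = (LEAST j. t \<le> b ^ j * l0)"
    have j: "t \<le> b ^ j * l0" unfolding j_def using \<open>\<exists>j. _\<close> by (rule LeastI_ex)
    then obtain k where k: "j = Suc k" using False by (cases j) auto
    then have level_k: "b ^ k * l0 < t" using not_less_Least[of k "\<lambda>j. t \<le> b ^ j * l0"] by (auto simp: j_def)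
    have "t powr (1 + \<delta>) \<le> (b ^ Suc k * l0) powr \<delta> * t"
      unfolding split using j k t \<delta> by (intro mult_right_mono powr_mono2) auto
    also have "\<dots> = (if b ^ k * l0 < t then (b ^ Suc k * l0) powr \<delta> * t else 0)"
      using level_k by simp
    finally have "ennreal (t powr (1 + \<delta>))
        \<le> ennreal (if b ^ k * l0 < t then (b ^ Suc k * l0) powr \<delta> * t else 0)"
      by (rule ennreal_leI)
    also have "\<dots> \<le> (\<Sum>k. ennreal (if b ^ k * l0 < t then (b ^ Suc k * l0) powr \<delta> * t else 0))"
      using sum_le_suminf[of "\<lambda>k. ennreal (if b ^ k * l0 < t then (b ^ Suc k * l0) powr \<delta> * t else 0)" "{k}"]
      by (simp add: summableI)
    finally show ?thesis by (simp add: add_increasing)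
  qed
qed

lemma nn_integral_powr_le_level_sets:
  fixes g :: "'b \<Rightarrow> real"
  assumes [measurable]: "g \<in> borel_measurable M" "Q \<in> sets M"
    and g_nonneg: "\<And>x. 0 \<le> g x" and b: "1 < b" and l0: "0 < l0" and \<delta>: "0 < \<delta>"
    and c: "0 \<le> c" "b powr \<delta> * c < 1" and "0 \<le> G"
    and mass_Q: "(\<integral>\<^sup>+x\<in>Q. ennreal (g x) \<partial>M) \<le> ennreal G"
    and levels: "\<And>k. (\<integral>\<^sup>+x\<in>Q \<inter> {y. b ^ k * l0 < g y}. ennreal (g x) \<partial>M) \<le> ennreal (c ^ k * G)"
  shows "(\<integral>\<^sup>+x\<in>Q. ennreal (g x powr (1 + \<delta>)) \<partial>M)
    \<le> ennreal (l0 powr \<delta> * G * (1 + b powr \<delta> / (1 - b powr \<delta> * c)))"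
proof -
  define \<rho> where "\<rho> = b powr \<delta> * c"
  have \<rho>: "0 \<le> \<rho>" "\<rho> < 1" using c by (auto simp: \<rho>_def)
  define T where "T k x = ennreal ((b ^ Suc k * l0) powr \<delta>)
    * (ennreal (g x) * indicator (Q \<inter> {y. b ^ k * l0 < g y}) x)" for k x
  have [measurable]: "(\<lambda>x. T k x) \<in> borel_measurable M" for k unfolding T_def by measurable
  have pointwise: "ennreal (g x powr (1 + \<delta>)) * indicator Q x
      \<le> ennreal (l0 powr \<delta>) * (ennreal (g x) * indicator Q x) + (\<Sum>k. T k x)" for x
  proof (cases "x \<in> Q")
    case True
    have "T k x = ennreal (if b ^ k * l0 < g x then (b ^ Suc k * l0) powr \<delta> * g x else 0)" for k
      using True g_nonneg[of x] by (simp add: T_def ennreal_mult indicator_def)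
    then show ?thesis
      using True powr_one_plus_le_level_sum[OF g_nonneg b l0 \<delta>, of x] g_nonneg[of x]
      by (simp add: ennreal_mult)
  qed simp
  have "(\<integral>\<^sup>+x\<in>Q. ennreal (g x powr (1 + \<delta>)) \<partial>M)
      \<le> (\<integral>\<^sup>+x. ennreal (l0 powr \<delta>) * (ennreal (g x) * indicator Q x) + (\<Sum>k. T k x) \<partial>M)"
    by (rule nn_integral_mono) (rule pointwise)
  also have "\<dots> = ennreal (l0 powr \<delta>) * (\<integral>\<^sup>+x\<in>Q. ennreal (g x) \<partial>M)
      + (\<Sum>k. ennreal ((b ^ Suc k * l0) powr \<delta>) * (\<integral>\<^sup>+x\<in>Q \<inter> {y. b ^ k * l0 < g y}. ennreal (g x) \<partial>M))"
    by (simp add: nn_integral_add nn_integral_cmult nn_integral_suminf T_def)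
  also have "\<dots> \<le> ennreal (l0 powr \<delta>) * ennreal G + (\<Sum>k. ennreal ((b ^ Suc k * l0) powr \<delta>) * ennreal (c ^ k * G))"
    using mass_Q levels by (intro add_mono mult_left_mono suminf_le) (auto intro: summableI)
  also have "(\<Sum>k. ennreal ((b ^ Suc k * l0) powr \<delta>) * ennreal (c ^ k * G))
      = (\<Sum>k. ennreal (l0 powr \<delta> * b powr \<delta> * G * \<rho> ^ k))"
  proof (rule suminf_cong)
    fix k
    have "(b ^ n) powr \<delta> = (b powr \<delta>) ^ n" for n
      using b by (simp add: powr_powr_swap flip: powr_realpow)
    then have eq: "(b ^ Suc k * l0) powr \<delta> * (c ^ k * G) = l0 powr \<delta> * b powr \<delta> * G * \<rho> ^ k"
      using b l0 by (simp add: powr_mult \<rho>_def power_mult_distrib)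
    have "ennreal ((b ^ Suc k * l0) powr \<delta>) * ennreal (c ^ k * G) = ennreal ((b ^ Suc k * l0) powr \<delta> * (c ^ k * G))"
      using c \<open>0 \<le> G\<close> by (simp add: ennreal_mult)
    then show "ennreal ((b ^ Suc k * l0) powr \<delta>) * ennreal (c ^ k * G) = ennreal (l0 powr \<delta> * b powr \<delta> * G * \<rho> ^ k)"
      unfolding eq .
  qed
  also have "\<dots> = ennreal (l0 powr \<delta> * b powr \<delta> * G * (1 / (1 - \<rho>)))"
    using \<rho> \<open>0 \<le> G\<close>
    by (subst suminf_ennreal2) (auto simp: suminf_mult summable_geometric suminf_geometric)
  also have "ennreal (l0 powr \<delta>) * ennreal G + \<dots> = ennreal (l0 powr \<delta> * G * (1 + b powr \<delta> / (1 - \<rho>)))"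
    using \<rho> \<open>0 \<le> G\<close> by (simp add: field_simps flip: ennreal_plus ennreal_mult)
  finally show ?thesis by (simp add: \<rho>_def)
qed

lemma set_nn_integral_cube_eq_integral:
  fixes f :: "'a::euclidean_space \<Rightarrow> real"
  assumes "f integrable_on UNIV" "\<And>x. 0 \<le> f x"
  shows "(\<integral>\<^sup>+y\<in>cube c l. ennreal (f y) \<partial>lebesgue) = ennreal (integral (cube c l) f)
    \<and> 0 \<le> integral (cube c l) f"
proof -
  have "(f has_integral integral (cube c l) f) (cube c l)"
    unfolding cube_def by (intro integrable_integral integrable_on_subcbox[OF assms(1)]) auto
  then have "((\<lambda>y. if y \<in> cube c l then f y else 0) has_integral integral (cube c l) f) UNIV"
    by (subst has_integral_restrict_UNIV)
  then have "(\<integral>\<^sup>+y. ennreal (if y \<in> cube c l then f y else 0) \<partial>lebesgue) = ennreal (integral (cube c l) f)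
      \<and> 0 \<le> integral (cube c l) f"
    by (subst (asm) has_integral_iff_nn_integral_lebesgue) (use assms(2) in auto)
  moreover have "(\<lambda>y. ennreal (if y \<in> cube c l then f y else 0)) = (\<lambda>y. ennreal (f y) * indicator (cube c l) y)"
    by (auto simp: fun_eq_iff indicator_def)
  ultimately show ?thesis by simp
qed

locale cube_integrable_weight =
  fixes g :: "'a::euclidean_space \<Rightarrow> real"
  assumes measurable_g [measurable]: "g \<in> borel_measurable lebesgue"
    and g_nonneg: "\<And>x. 0 \<le> g x"
    and mass_cube_finite: "\<And>a h. 0 < h \<Longrightarrow> mass g (cube a h) \<noteq> \<infinity>"
begin

lemma mass_cube_eq_avg:
  assumes "0 < h"
  shows "mass g (cube a h) = ennreal (h ^ DIM('a) * avg (cube a h) g)"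
  unfolding mass_def
  by (rule set_nn_integral_eq_avg[OF emeasure_cube[OF less_imp_le[OF assms]]])
    (use assms mass_cube_finite[OF assms] in \<open>simp_all add: mass_def\<close>)

lemma mass_cube_le_iff:
  assumes "0 < h" "0 \<le> lam"
  shows "mass g (cube a h) \<le> ennreal lam * emeasure lebesgue (cube a h) \<longleftrightarrow> avg (cube a h) g \<le> lam"
  using assms unfolding mass_cube_eq_avg[OF assms(1)] ennreal_mult_emeasure_cube[OF assms]
  by (simp add: ennreal_le_iff mult_le_cancel_left_pos)

lemma le_mass_cube_iff:
  assumes "0 < h" "0 \<le> lam"
  shows "ennreal lam * emeasure lebesgue (cube a h) \<le> mass g (cube a h) \<longleftrightarrow> lam \<le> avg (cube a h) g"
  using assms unfolding mass_cube_eq_avg[OF assms(1)] ennreal_mult_emeasure_cube[OF assms]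
  by (simp add: ennreal_le_iff mult_le_cancel_left_pos avg_nonneg)

lemma cz_set_weak_type:
  assumes "0 < h" "0 \<le> lam"
  shows "ennreal lam * emeasure lebesgue (cz_set N lam g a h) \<le> mass g (cz_set N lam g a h)"
  using assms
proof (induction N arbitrary: a h)
  case 0
  then show ?case
    using le_mass_cube_iff[of h lam a] by (auto intro: less_imp_le)
next
  case (Suc N)
  show ?case
  proof (cases "lam < avg (cube a h) g")
    case True
    then show ?thesis
      using Suc.prems le_mass_cube_iff[of h lam a] by (auto intro: less_imp_le)
  next
    case False
    define X where "X S = cz_set N lam g (dyadic_child a h S) (h/2)" for S
    have X: "X S \<in> sets lebesgue \<and> X S \<subseteq> cube (dyadic_child a h S) (h/2)" for S
      using Suc.prems by (simp add: X_def sets_cz_set cz_set_subset_cube)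
    have eq: "cz_set (Suc N) lam g a h = (\<Union>S\<in>Pow Basis. X S)" using False by (simp add: X_def)
    have "ennreal lam * emeasure lebesgue (cz_set (Suc N) lam g a h)
        = (\<Sum>S\<in>Pow Basis. ennreal lam * emeasure lebesgue (X S))"
      unfolding eq emeasure_Union_dyadic_children[OF X] sum_distrib_left ..
    also have "\<dots> \<le> (\<Sum>S\<in>Pow Basis. mass g (X S))"
      by (rule sum_mono) (use Suc.IH Suc.prems in \<open>auto simp: X_def\<close>)
    also have "\<dots> = mass g (cz_set (Suc N) lam g a h)"
      unfolding eq mass_Union_dyadic_children[OF measurable_g X] ..
    finally show ?thesis .
  qed
qed

text \<open>Since the parent cube has average at most \<open>lam\<close>, the weak-type estimate confines
  the level-\<open>2^(DIM('a)+1) * lam\<close> set to half of each child.\<close>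
lemma mass_cz_set_dyadic_child_le:
  assumes \<beta>: "0 < \<beta>" "\<beta> < 1"
    and small: "\<And>c l F. 0 < l \<Longrightarrow> F \<in> sets lebesgue \<Longrightarrow> F \<subseteq> cube c l \<Longrightarrow>
       emeasure lebesgue F \<le> ennreal (l ^ DIM('a) / 2) \<Longrightarrow> mass g F \<le> ennreal (1 - \<beta>) * mass g (cube c l)"
    and h: "0 < h" and lam: "0 < lam" and avg_le: "avg (cube a h) g \<le> lam" and S: "S \<subseteq> Basis"
  shows "mass g (cz_set N (2 ^ (DIM('a) + 1) * lam) g (dyadic_child a h S) (h/2))
    \<le> ennreal (1 - \<beta>) * mass g (cube (dyadic_child a h S) (h/2))"
proof -
  define M :: real where "M = 2 ^ (DIM('a) + 1)"
  define X where "X = cz_set N (M * lam) g (dyadic_child a h S) (h/2)"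
  have X: "X \<in> sets lebesgue" "X \<subseteq> cube (dyadic_child a h S) (h/2)"
    using h by (simp_all add: X_def sets_cz_set cz_set_subset_cube)
  have "ennreal (M * lam) * emeasure lebesgue X \<le> mass g X"
    unfolding X_def by (rule cz_set_weak_type) (use h lam in \<open>auto simp: M_def\<close>)
  also have "\<dots> \<le> mass g (cube a h)"
    using X dyadic_child_subset[of h S a] S h by (intro mass_mono) auto
  also have "\<dots> \<le> ennreal (h ^ DIM('a) * lam)"
    using h avg_le by (simp add: mass_cube_eq_avg ennreal_leI)
  finally have mass_le: "ennreal (M * lam) * emeasure lebesgue X \<le> ennreal (h ^ DIM('a) * lam)" .
  have "emeasure lebesgue X \<le> emeasure lebesgue (cube (dyadic_child a h S) (h/2))"
    using X by (intro emeasure_mono) auto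
  also have "\<dots> = ennreal ((h/2) ^ DIM('a))"
    by (rule emeasure_cube) (use h in simp)
  finally obtain mX where mX: "emeasure lebesgue X = ennreal mX" "0 \<le> mX"
    using h by (auto simp: le_ennreal_iff)
  have "ennreal (M * lam * mX) \<le> ennreal (h ^ DIM('a) * lam)"
    using mass_le unfolding mX(1) by (subst ennreal_mult) (use mX lam in \<open>auto simp: M_def\<close>)
  then have "M * lam * mX \<le> h ^ DIM('a) * lam"
    using h lam by (subst (asm) ennreal_le_iff) auto
  then have "mX \<le> (h/2) ^ DIM('a) / 2"
    using lam by (simp add: M_def power_divide field_simps)
  then show ?thesis
    using X mX h unfolding X_def M_def by (intro small) auto
qed

lemma cz_set_good_lambda:
  assumes \<beta>: "0 < \<beta>" "\<beta> < 1"
    and small: "\<And>c l F. 0 < l \<Longrightarrow> F \<in> sets lebesgue \<Longrightarrow> F \<subseteq> cube c l \<Longrightarrow>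
       emeasure lebesgue F \<le> ennreal (l ^ DIM('a) / 2) \<Longrightarrow> mass g F \<le> ennreal (1 - \<beta>) * mass g (cube c l)"
    and h: "0 < h" and lam: "0 < lam" and avg_le: "avg (cube a h) g \<le> lam"
  shows "mass g (cz_set N (2 ^ (DIM('a) + 1) * lam) g a h) \<le> ennreal (1 - \<beta>) * mass g (cz_set N lam g a h)"
  using h avg_le
proof (induction N arbitrary: a h)
  case 0
  have "1 \<le> (2::real) ^ (DIM('a) + 1)" by (rule one_le_power) simp
  then have "lam \<le> 2 ^ (DIM('a) + 1) * lam" using lam by (simp add: mult_le_cancel_right1)
  then show ?case using "0.prems" by simp
next
  case (Suc N)
  define M :: real where "M = 2 ^ (DIM('a) + 1)"
  have "1 \<le> M" unfolding M_def by (rule one_le_power) simp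
  then have "lam \<le> M * lam" using lam by (simp add: mult_le_cancel_right1)
  then have not_above: "\<not> lam < avg (cube a h) g" "\<not> M * lam < avg (cube a h) g"
    using Suc.prems by auto
  define X1 where "X1 S = cz_set N (M * lam) g (dyadic_child a h S) (h/2)" for S
  define X2 where "X2 S = cz_set N lam g (dyadic_child a h S) (h/2)" for S
  have X1: "X1 S \<in> sets lebesgue \<and> X1 S \<subseteq> cube (dyadic_child a h S) (h/2)"
    and X2: "X2 S \<in> sets lebesgue \<and> X2 S \<subseteq> cube (dyadic_child a h S) (h/2)" for S
    using Suc.prems by (simp_all add: X1_def X2_def sets_cz_set cz_set_subset_cube)
  have each: "mass g (X1 S) \<le> ennreal (1 - \<beta>) * mass g (X2 S)" if S: "S \<subseteq> Basis" for S
  proof (cases "lam < avg (cube (dyadic_child a h S) (h/2)) g")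
    case False
    then show ?thesis using Suc.IH[of "h/2" "dyadic_child a h S"] Suc.prems
      unfolding X1_def X2_def M_def by simp
  next
    case True
    show ?thesis
      unfolding X1_def X2_def M_def cz_set_eq_cube[OF True]
      by (rule mass_cz_set_dyadic_child_le[OF \<beta> small Suc.prems(1) lam Suc.prems(2) S])
  qed
  have split: "cz_set (Suc N) (M * lam) g a h = (\<Union>S\<in>Pow Basis. X1 S)"
    "cz_set (Suc N) lam g a h = (\<Union>S\<in>Pow Basis. X2 S)"
    using not_above by (simp_all add: X1_def X2_def)
  have "mass g (cz_set (Suc N) (M * lam) g a h) = (\<Sum>S\<in>Pow Basis. mass g (X1 S))"
    unfolding split mass_Union_dyadic_children[OF measurable_g X1] ..
  also have "\<dots> \<le> (\<Sum>S\<in>Pow Basis. ennreal (1 - \<beta>) * mass g (X2 S))"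
    using each by (intro sum_mono) auto
  also have "\<dots> = ennreal (1 - \<beta>) * mass g (cz_set (Suc N) lam g a h)"
    unfolding split mass_Union_dyadic_children[OF measurable_g X2] sum_distrib_left ..
  finally show ?case unfolding M_def .
qed

lemma mass_dyadic_hull_le:
  assumes "0 < h" "0 \<le> lam" "A \<inter> cz_set N lam g a h = {}"
  shows "mass g (dyadic_hull N A a h) \<le> ennreal lam * emeasure lebesgue (dyadic_hull N A a h)"
  using assms
proof (induction N arbitrary: a h)
  case 0
  then show ?case
    using mass_cube_le_iff[of h lam a] by (auto simp: not_less)
next
  case (Suc N)
  show ?case
  proof (cases "lam < avg (cube a h) g")
    case True
    then have "A \<inter> cube a h = {}" using Suc.prems cz_set_eq_cube[OF True, of "Suc N"] by simp
    then show ?thesis using dyadic_hull_empty[of h A a "Suc N"] Suc.prems by simp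
  next
    case False
    define X where "X S = dyadic_hull N A (dyadic_child a h S) (h/2)" for S
    have X: "X S \<in> sets lebesgue \<and> X S \<subseteq> cube (dyadic_child a h S) (h/2)" for S
      using dyadic_hull_bounds[of "h/2" A "dyadic_child a h S" N] Suc.prems unfolding X_def by auto
    have eq: "dyadic_hull (Suc N) A a h = (\<Union>S\<in>Pow Basis. X S)" by (simp add: X_def)
    have "A \<inter> cz_set N lam g (dyadic_child a h S) (h/2) = {}" if "S \<subseteq> Basis" for S
      using Suc.prems(3) False that by auto
    then have "mass g (X S) \<le> ennreal lam * emeasure lebesgue (X S)" if "S \<subseteq> Basis" for S
      using Suc.IH Suc.prems that by (simp add: X_def)
    then have "(\<Sum>S\<in>Pow Basis. mass g (X S)) \<le> (\<Sum>S\<in>Pow Basis. ennreal lam * emeasure lebesgue (X S))"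
      by (intro sum_mono) auto
    then show ?thesis
      unfolding eq mass_Union_dyadic_children[OF measurable_g X] emeasure_Union_dyadic_children[OF X]
        sum_distrib_left .
  qed
qed

lemma mass_le_if_disjoint_cz_sets:
  assumes h: "0 < h" and lam: "0 \<le> lam" and l: "0 < l"
    and A: "A \<subseteq> cube a h" "A \<subseteq> cube c l" and disjoint: "\<And>N. A \<inter> cz_set N lam g a h = {}"
  shows "mass g A \<le> ennreal (lam * l ^ DIM('a))"
proof -
  have bound: "mass g A \<le> ennreal (lam * (l + 2 * (h / 2 ^ N)) ^ DIM('a))" for N
  proof -
    define k where "k = h / 2 ^ N"
    have k: "0 \<le> k" using h by (simp add: k_def)
    have hull_near: "dyadic_hull N A a h \<subseteq> cube (c - k *\<^sub>R One) (l + 2 * k)"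
    proof
      fix y assume "y \<in> dyadic_hull N A a h"
      then obtain z where z: "z \<in> A" "\<forall>i\<in>Basis. \<bar>y \<bullet> i - z \<bullet> i\<bar> \<le> k"
        using dyadic_hull_near[of h y N A a] h by (auto simp: k_def)
      then show "y \<in> cube (c - k *\<^sub>R One) (l + 2 * k)"
        using A(2) by (fastforce simp: mem_cube inner_diff_left abs_le_iff)
    qed
    have "mass g A \<le> mass g (dyadic_hull N A a h)"
      using dyadic_hull_bounds[of h A a N] h A(1) by (intro mass_mono) auto
    also have "\<dots> \<le> ennreal lam * emeasure lebesgue (dyadic_hull N A a h)"
      by (rule mass_dyadic_hull_le[OF h lam disjoint])
    also have "\<dots> \<le> ennreal lam * emeasure lebesgue (cube (c - k *\<^sub>R One) (l + 2 * k))"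
      using hull_near by (intro mult_left_mono emeasure_mono) auto
    also have "\<dots> = ennreal (lam * (l + 2 * k) ^ DIM('a))"
      using l k lam ennreal_mult_emeasure_cube[of "l + 2 * k" lam "c - k *\<^sub>R One"]
      by (simp add: mult.commute)
    finally show ?thesis by (simp add: k_def)
  qed
  have "(\<lambda>N. ennreal (lam * (l + 2 * (h / 2 ^ N)) ^ DIM('a))) \<longlonglongrightarrow> ennreal (lam * (l + 2 * 0) ^ DIM('a))"
    by (intro tendsto_intros LIMSEQ_divide_realpow_zero) auto
  then show ?thesis
    using bound by (auto intro: LIMSEQ_le_const)
qed

text \<open>Almost every point where \<open>g > lam\<close> is caught by the stopping time: otherwise
  a Lebesgue point of \<open>g\<close> restricted to the uncaught set would have arbitrarily small cubes
  around it on which this restriction has average at most \<open>lam\<close>.\<close>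
lemma AE_mem_cz_set:
  assumes h: "0 < h" and lam: "0 \<le> lam"
  shows "AE x in lebesgue. x \<in> cube a h \<longrightarrow> lam < g x \<longrightarrow> (\<exists>N. x \<in> cz_set N lam g a h)"
proof -
  define G where "G = cube a h - (\<Union>N. cz_set N lam g a h)"
  have "cz_set N lam g a h \<in> sets lebesgue" for N using h by (simp add: sets_cz_set)
  then have [measurable]: "G \<in> sets lebesgue" unfolding G_def by auto
  define f where "f y = g y * indicator G y" for y
  have [measurable]: "f \<in> borel_measurable lebesgue" unfolding f_def by measurable
  have f_nonneg: "0 \<le> f y" for y using g_nonneg by (simp add: f_def)
  have "(\<integral>\<^sup>+y. ennreal (norm (f y)) \<partial>lebesgue) \<le> mass g (cube a h)"
    unfolding mass_def using f_nonneg by (intro nn_integral_mono) (auto simp: f_def G_def indicator_def)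
  also have "\<dots> < \<infinity>" using mass_cube_finite[OF h, of a] by (simp add: less_top)
  finally have "integrable lebesgue f" by (intro integrableI_bounded) auto
  then have f_int: "f integrable_on UNIV" by (rule integrable_on_lebesgue)
  then have "f integrable_on cbox u v" for u v by (rule integrable_on_subcbox) auto
  then obtain N0 where "negligible N0"
    and Lebesgue_point: "\<And>x e. \<lbrakk>x \<notin> N0; 0 < e\<rbrakk> \<Longrightarrow> \<exists>d>0. \<forall>l. 0 < l \<and> l < d \<longrightarrow>
        norm (integral (cbox x (x + l *\<^sub>R One)) f /\<^sub>R l ^ DIM('a) - f x) < e"
    using integrable_ccontinuous_explicit[of f] by metis
  define B where "B = N0 \<union> (cbox a (a + h *\<^sub>R One) - box a (a + h *\<^sub>R One))"
  have "negligible B" unfolding B_def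
    using \<open>negligible N0\<close> negligible_frontier_interval by (rule negligible_Un)
  then have "B \<in> null_sets lebesgue" by (simp add: negligible_iff_null_sets)
  then show ?thesis
  proof (rule AE_I', intro subsetI)
    fix x assume "x \<in> {x \<in> space lebesgue. \<not> (x \<in> cube a h \<longrightarrow> lam < g x \<longrightarrow> (\<exists>N. x \<in> cz_set N lam g a h))}"
    then have x: "x \<in> cube a h" "lam < g x" "x \<in> G" by (auto simp: G_def)
    show "x \<in> B"
    proof (rule ccontr)
      assume "x \<notin> B"
      then have "x \<notin> N0" "x \<in> box a (a + h *\<^sub>R One)"
        using x by (auto simp: B_def cube_def)
      obtain m where "0 < m" and inside: "\<And>l. 0 \<le> l \<Longrightarrow> l \<le> m \<Longrightarrow> cube x l \<subseteq> cube a h"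
        using cube_subset_if_mem_box[OF \<open>x \<in> box _ _\<close>] by blast
      obtain d where "0 < d" and close: "\<And>l. 0 < l \<Longrightarrow> l < d \<Longrightarrow>
          norm (integral (cbox x (x + l *\<^sub>R One)) f /\<^sub>R l ^ DIM('a) - f x) < g x - lam"
        using Lebesgue_point[OF \<open>x \<notin> N0\<close>, of "g x - lam"] x by auto
      define l where "l = min (d/2) m"
      have l: "0 < l" "l < d" "l \<le> m" using \<open>0 < d\<close> \<open>0 < m\<close> by (auto simp: l_def)
      define I where "I = integral (cbox x (x + l *\<^sub>R One)) f"
      have I: "(\<integral>\<^sup>+y\<in>cube x l. ennreal (f y) \<partial>lebesgue) = ennreal I \<and> 0 \<le> I"
        using set_nn_integral_cube_eq_integral[OF f_int f_nonneg, of x l] by (simp add: I_def cube_def)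
      then have "ennreal I = (\<integral>\<^sup>+y\<in>cube x l. ennreal (f y) \<partial>lebesgue)" by simp
      also have "\<dots> = mass g (cube x l \<inter> G)"
        unfolding mass_def f_def by (intro nn_integral_cong) (auto simp: indicator_def)
      also have "\<dots> \<le> ennreal (lam * l ^ DIM('a))"
        using inside[of l] l by (intro mass_le_if_disjoint_cz_sets[OF h lam \<open>0 < l\<close>]) (auto simp: G_def)
      finally have "I / l ^ DIM('a) \<le> lam"
        using l lam I by (simp add: divide_le_eq mult.commute)
      moreover have "\<bar>I / l ^ DIM('a) - g x\<bar> < g x - lam"
        using close[OF l(1,2)] x by (simp add: I_def f_def divide_inverse_commute)
      ultimately show False by linarith
    qed
  qed
qed

lemma mass_level_set_le:
  assumes \<beta>: "0 < \<beta>" "\<beta> < 1"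
    and small: "\<And>c l F. 0 < l \<Longrightarrow> F \<in> sets lebesgue \<Longrightarrow> F \<subseteq> cube c l \<Longrightarrow>
       emeasure lebesgue F \<le> ennreal (l ^ DIM('a) / 2) \<Longrightarrow> mass g F \<le> ennreal (1 - \<beta>) * mass g (cube c l)"
    and h: "0 < h" and l0: "0 < l0" "avg (cube a h) g \<le> l0"
  shows "mass g (cube a h \<inter> {x. (2 ^ (DIM('a) + 1)) ^ k * l0 < g x})
    \<le> ennreal ((1 - \<beta>) ^ k) * mass g (cube a h)"
proof -
  define M :: real where "M = 2 ^ (DIM('a) + 1)"
  have "1 \<le> M" unfolding M_def by (rule one_le_power) simp
  then have "1 \<le> M ^ k" "0 < M ^ k" for k by (simp_all add: one_le_power)
  then have level_pos: "0 < M ^ k * l0" and "l0 \<le> M ^ k * l0" for k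
    using l0 by (simp_all add: mult_le_cancel_right1)
  then have level_avg: "avg (cube a h) g \<le> M ^ k * l0" for k
    using l0(2) order_trans by blast
  have decay: "mass g (cz_set N (M ^ k * l0) g a h) \<le> ennreal ((1 - \<beta>) ^ k) * mass g (cube a h)" for N
  proof (induction k)
    case 0
    show ?case using mass_mono[OF cz_set_subset_cube[of h N "M ^ 0 * l0" g a]] h by simp
  next
    case (Suc k)
    have level_Suc: "M ^ Suc k * l0 = 2 ^ (DIM('a) + 1) * (M ^ k * l0)" by (simp add: M_def)
    have "mass g (cz_set N (M ^ Suc k * l0) g a h)
        \<le> ennreal (1 - \<beta>) * mass g (cz_set N (M ^ k * l0) g a h)"
      unfolding level_Suc by (rule cz_set_good_lambda[OF \<beta> small h level_pos level_avg])
    also have "\<dots> \<le> ennreal (1 - \<beta>) * (ennreal ((1 - \<beta>) ^ k) * mass g (cube a h))"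
      by (rule mult_left_mono[OF Suc.IH]) simp
    also have "\<dots> = ennreal ((1 - \<beta>) ^ Suc k) * mass g (cube a h)"
      using \<beta> by (simp add: ennreal_mult mult.assoc)
    finally show ?case .
  qed
  have "AE x in lebesgue. ennreal (g x) * indicator (cube a h \<inter> {x. M ^ k * l0 < g x}) x
      \<le> ennreal (g x) * indicator (\<Union>N. cz_set N (M ^ k * l0) g a h) x"
    using AE_mem_cz_set[OF h less_imp_le[OF level_pos], of a k]
    by eventually_elim (auto simp: indicator_def)
  then have "mass g (cube a h \<inter> {x. M ^ k * l0 < g x}) \<le> mass g (\<Union>N. cz_set N (M ^ k * l0) g a h)"
    unfolding mass_def by (rule nn_integral_mono_AE)
  also have "\<dots> = (SUP N. mass g (cz_set N (M ^ k * l0) g a h))"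
    using h by (intro mass_UN_incseq incseq_cz_set) (auto simp: sets_cz_set)
  also have "\<dots> \<le> ennreal ((1 - \<beta>) ^ k) * mass g (cube a h)"
    by (rule SUP_least) (rule decay)
  finally show ?thesis by (simp add: M_def)
qed

lemma reverse_Holder_mass:
  assumes \<beta>: "0 < \<beta>" "\<beta> < 1"
    and small: "\<And>c l F. 0 < l \<Longrightarrow> F \<in> sets lebesgue \<Longrightarrow> F \<subseteq> cube c l \<Longrightarrow>
       emeasure lebesgue F \<le> ennreal (l ^ DIM('a) / 2) \<Longrightarrow> mass g F \<le> ennreal (1 - \<beta>) * mass g (cube c l)"
  obtains \<delta> K where "0 < \<delta>" "0 \<le> K"
    "\<And>a h. 0 < h \<Longrightarrow>
      mass (\<lambda>x. g x powr (1 + \<delta>)) (cube a h) \<le> ennreal (K * h ^ DIM('a) * avg (cube a h) g powr (1 + \<delta>))"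
proof -
  define M :: real where "M = 2 ^ (DIM('a) + 1)"
  have M: "1 < M" unfolding M_def by (rule one_less_power) auto
  have "((\<lambda>d. M powr d * (1 - \<beta>)) \<longlongrightarrow> M powr 0 * (1 - \<beta>)) (at_right 0)"
    using M by (intro tendsto_intros) auto
  moreover have "M powr 0 * (1 - \<beta>) < 1" using M \<beta> by simp
  ultimately have "\<forall>\<^sub>F d in at_right 0. M powr d * (1 - \<beta>) < 1"
    by (rule order_tendstoD(2))
  then obtain b where b: "0 < b" "\<And>y. 0 < y \<Longrightarrow> y < b \<Longrightarrow> M powr y * (1 - \<beta>) < 1"
    unfolding eventually_at_right_field by auto
  define \<delta> where "\<delta> = b / 2"
  have \<delta>: "0 < \<delta>" "M powr \<delta> * (1 - \<beta>) < 1" using b by (auto simp: \<delta>_def)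
  define K where "K = 1 + M powr \<delta> / (1 - M powr \<delta> * (1 - \<beta>))"
  show thesis
  proof (rule that[OF \<delta>(1)])
    show "0 \<le> K" using \<delta> by (simp add: K_def)
    fix a :: 'a and h :: real assume h: "0 < h"
    define A where "A = avg (cube a h) g"
    define l0 where "l0 = (if A = 0 then 1 else A)"
    have A: "0 \<le> A" by (simp add: A_def avg_nonneg)
    then have l0: "0 < l0" "A \<le> l0" by (auto simp: l0_def)
    have "mass (\<lambda>x. g x powr (1 + \<delta>)) (cube a h) \<le> ennreal (l0 powr \<delta> * (h ^ DIM('a) * A) * K)"
      unfolding mass_def K_def
    proof (rule nn_integral_powr_le_level_sets[OF measurable_g _ g_nonneg M l0(1) \<delta>(1) _ \<delta>(2)])
      show "(\<integral>\<^sup>+x\<in>cube a h. ennreal (g x) \<partial>lebesgue) \<le> ennreal (h ^ DIM('a) * A)"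
        using mass_cube_eq_avg[OF h] by (simp add: mass_def A_def)
      have "mass g (cube a h \<inter> {y. M ^ k * l0 < g y}) \<le> ennreal ((1 - \<beta>) ^ k) * mass g (cube a h)" for k
        unfolding M_def using l0 by (intro mass_level_set_le[OF \<beta> small h]) (auto simp: A_def)
      also have "ennreal ((1 - \<beta>) ^ k) * mass g (cube a h) = ennreal ((1 - \<beta>) ^ k * (h ^ DIM('a) * A))" for k
        using \<beta> A h by (simp add: mass_cube_eq_avg A_def ennreal_mult)
      finally show "(\<integral>\<^sup>+x\<in>cube a h \<inter> {y. M ^ k * l0 < g y}. ennreal (g x) \<partial>lebesgue)
          \<le> ennreal ((1 - \<beta>) ^ k * (h ^ DIM('a) * A))" for k
        by (simp add: mass_def)
    qed (use \<beta> A h in auto)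
    also have "l0 powr \<delta> * (h ^ DIM('a) * A) * K = K * h ^ DIM('a) * A powr (1 + \<delta>)"
    proof (cases "A = 0")
      case False
      then have "A powr (1 + \<delta>) = A powr \<delta> * A" using A by (simp add: powr_add)
      then show ?thesis using False by (simp add: l0_def)
    qed (simp add: l0_def)
    finally show "mass (\<lambda>x. g x powr (1 + \<delta>)) (cube a h)
        \<le> ennreal (K * h ^ DIM('a) * avg (cube a h) g powr (1 + \<delta>))"
      by (simp add: A_def)
  qed
qed

end

definition reverse_Holder :: "real \<Rightarrow> real \<Rightarrow> ('a::euclidean_space \<Rightarrow> real) \<Rightarrow> bool" where
  "reverse_Holder \<delta> K w \<longleftrightarrow> 0 \<le> K \<and> (\<forall>a h. 0 < h \<longrightarrow>
     mass (\<lambda>x. w x powr (1 + \<delta>)) (cube a h) \<noteq> \<infinity> \<and>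
     avg (cube a h) (\<lambda>x. w x powr (1 + \<delta>)) \<le> K * avg (cube a h) w powr (1 + \<delta>))"

theorem A_weight_reverse_Holder:
  assumes "A_weight t w" "1 < t"
  obtains \<delta> K where "0 < \<delta>" "reverse_Holder \<delta> K w"
proof -
  interpret cube_integrable_weight w
    by standard (use A_weightD[OF assms(1)] in \<open>auto simp: mass_def\<close>)
  obtain \<beta> where "0 < \<beta>" "\<beta> < 1"
    "\<And>c l F. 0 < l \<Longrightarrow> F \<in> sets lebesgue \<Longrightarrow> F \<subseteq> cube c l \<Longrightarrow>
       emeasure lebesgue F \<le> ennreal (l ^ DIM('a) / 2) \<Longrightarrow> mass w F \<le> ennreal (1 - \<beta>) * mass w (cube c l)"
    using A_weight_mass_small_subset[OF assms] by blast
  then obtain \<delta> K where "0 < \<delta>" "0 \<le> K" and RH: "\<And>a h. 0 < h \<Longrightarrow>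
      mass (\<lambda>x. w x powr (1 + \<delta>)) (cube a h) \<le> ennreal (h ^ DIM('a) * (K * avg (cube a h) w powr (1 + \<delta>)))"
    by (rule reverse_Holder_mass) (auto simp: mult_ac)
  have "reverse_Holder \<delta> K w"
    unfolding reverse_Holder_def
  proof (intro conjI[OF \<open>0 \<le> K\<close>] allI impI)
    fix a :: 'a and h :: real assume h: "0 < h"
    have "0 \<le> K * avg (cube a h) w powr (1 + \<delta>)" using \<open>0 \<le> K\<close> by simp
    from avg_le_if_set_nn_integral_le[OF emeasure_cube[OF less_imp_le[OF h]] _ RH[OF h, unfolded mass_def] this] h
    show "mass (\<lambda>x. w x powr (1 + \<delta>)) (cube a h) \<noteq> \<infinity> \<and>
        avg (cube a h) (\<lambda>x. w x powr (1 + \<delta>)) \<le> K * avg (cube a h) w powr (1 + \<delta>)"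
      by (simp add: mass_def)
  qed
  with \<open>0 < \<delta>\<close> show thesis by (rule that)
qed

section \<open>Perturbation of Muckenhoupt weights\<close>

lemma reverse_HolderD:
  assumes "reverse_Holder \<delta> K w" "0 < h"
  shows "0 \<le> K" "(\<integral>\<^sup>+x\<in>cube a h. ennreal (w x powr (1 + \<delta>)) \<partial>lebesgue) \<noteq> \<infinity>"
    "avg (cube a h) (\<lambda>x. w x powr (1 + \<delta>)) \<le> K * avg (cube a h) w powr (1 + \<delta>)"
  using assms by (auto simp: reverse_Holder_def mass_def)

text \<open>Hoelder's inequality with exponent \<open>y\<close> against the reverse Hoelder inequality for
  \<open>f\<close>, and Jensen's inequality for the power \<open>\<beta> y/(y - 1) < 1\<close> of \<open>g\<close>.\<close>
lemma avg_powr_mult_powr_le: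
  fixes f g :: "'a::euclidean_space \<Rightarrow> real"
  assumes [measurable]: "f \<in> borel_measurable lebesgue" "g \<in> borel_measurable lebesgue"
    and g_nonneg: "\<And>z. 0 \<le> g z"
    and RH: "reverse_Holder \<delta> K f" and h: "0 < h"
    and g_finite: "(\<integral>\<^sup>+z\<in>cube a h. ennreal (g z) \<partial>lebesgue) \<noteq> \<infinity>"
    and y: "1 < y" "\<alpha> * y = 1 + \<delta>" and \<beta>: "0 < \<beta>" "\<beta> * (y / (y - 1)) < 1"
  shows "(\<integral>\<^sup>+z\<in>cube a h. ennreal (f z powr \<alpha> * g z powr \<beta>) \<partial>lebesgue) \<noteq> \<infinity>"
    and "avg (cube a h) (\<lambda>z. f z powr \<alpha> * g z powr \<beta>)
      \<le> K powr (1/y) * avg (cube a h) f powr \<alpha> * avg (cube a h) g powr \<beta>"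
proof -
  define y' where "y' = y / (y - 1)"
  define \<gamma> where "\<gamma> = \<beta> * y'"
  have \<gamma>: "0 < \<gamma>" "\<gamma> < 1" using \<beta> y by (auto simp: \<gamma>_def y'_def)
  have y_pos: "0 < y" "0 < y'" using y by (auto simp: y'_def)
  have f_y: "(f z powr \<alpha>) powr y = f z powr (1 + \<delta>)" for z
    using y(2) by (simp add: powr_powr)
  have g_y': "(g z powr \<beta>) powr y' = g z powr \<gamma>" for z
    by (simp add: powr_powr \<gamma>_def)
  note cube = emeasure_cube[OF less_imp_le[OF h], of a] zero_less_power[OF h, of "DIM('a)"]
  note RH = reverse_HolderD(1)[OF RH h] reverse_HolderD(2,3)[OF RH h, of a]
  note Jensen = avg_powr_le[OF _ _ g_nonneg \<gamma> cube g_finite]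
  note Holder = avg_mult_le_Holder[where f="\<lambda>z. f z powr \<alpha>" and g="\<lambda>z. g z powr \<beta>",
      OF _ _ _ _ _ cube y(1) y'_def, unfolded f_y g_y']
  show "(\<integral>\<^sup>+z\<in>cube a h. ennreal (f z powr \<alpha> * g z powr \<beta>) \<partial>lebesgue) \<noteq> \<infinity>"
    using Holder(1) RH Jensen by simp
  have "avg (cube a h) (\<lambda>z. f z powr \<alpha> * g z powr \<beta>)
      \<le> avg (cube a h) (\<lambda>z. f z powr (1 + \<delta>)) powr (1/y) * avg (cube a h) (\<lambda>z. g z powr \<gamma>) powr (1/y')"
    using Holder(2) RH Jensen by simp
  also have "\<dots> \<le> (K * avg (cube a h) f powr (1 + \<delta>)) powr (1/y) * (avg (cube a h) g powr \<gamma>) powr (1/y')"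
    using RH Jensen y_pos by (intro mult_mono powr_mono2) (auto simp: avg_nonneg)
  also have "\<dots> = K powr (1/y) * avg (cube a h) f powr \<alpha> * avg (cube a h) g powr \<beta>"
  proof -
    have "(1 + \<delta>) * (1/y) = \<alpha>" "\<gamma> * (1/y') = \<beta>"
      using y_pos by (auto simp: \<gamma>_def field_simps simp flip: y(2))
    then show ?thesis using RH by (simp add: powr_mult powr_powr avg_nonneg)
  qed
  finally show "avg (cube a h) (\<lambda>z. f z powr \<alpha> * g z powr \<beta>)
      \<le> K powr (1/y) * avg (cube a h) f powr \<alpha> * avg (cube a h) g powr \<beta>" .
qed

lemma A_weight_perturbed:
  fixes w v :: "'a::euclidean_space \<Rightarrow> real"
  assumes Aw: "A_weight P w" "1 < P" and Av: "A_weight Q v" "1 < Q"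
    and RH_w: "reverse_Holder \<delta>1 K1 w" and RH_dual: "reverse_Holder \<delta>2 K2 (\<lambda>z. w z powr (-1/(P-1)))"
    and \<epsilon>: "0 < \<epsilon>" and P': "1 < P'"
    and x: "1 < x" "(1 + \<epsilon>) * x = 1 + \<delta>1" "\<epsilon> * (x / (x - 1)) * (Q - 1) < 1"
    and y: "1 < y" "(1 + \<epsilon>) * (P - 1) * y = (1 + \<delta>2) * (P' - 1)" "\<epsilon> * (y / (y - 1)) < P' - 1"
  shows "A_weight P' (\<lambda>z. w z powr (1 + \<epsilon>) * v z powr (-\<epsilon>))"
proof -
  note [measurable] = A_weightD(1)[OF Aw(1)] A_weightD(1)[OF Av(1)]
  obtain Cw where Cw: "\<And>a h. h > 0 \<Longrightarrow>
      avg (cube a h) w * avg (cube a h) (\<lambda>z. w z powr (-1/(P-1))) powr (P-1) \<le> Cw"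
    using A_weightD(6)[OF Aw(1)] by blast
  obtain Cv where Cv: "\<And>a h. h > 0 \<Longrightarrow>
      avg (cube a h) v * avg (cube a h) (\<lambda>z. v z powr (-1/(Q-1))) powr (Q-1) \<le> Cv"
    using A_weightD(6)[OF Av(1)] by blast
  define u where "u = (\<lambda>z. w z powr (1 + \<epsilon>) * v z powr (-\<epsilon>))"
  define \<rho> where "\<rho> = (1 + \<epsilon>) * (P - 1) / (P' - 1)"
  have u_eq: "u = (\<lambda>z. w z powr (1 + \<epsilon>) * (v z powr (-1/(Q-1))) powr (\<epsilon> * (Q - 1)))"
    using Av(2) by (simp add: u_def powr_powr)
  have "(1 + \<epsilon>) * (-1/(P'-1)) = (-1/(P-1)) * \<rho>" "-\<epsilon> * (-1/(P'-1)) = \<epsilon> / (P' - 1)"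
    using Aw(2) by (simp_all add: \<rho>_def divide_simps)
  then have dual_u_eq: "u z powr (-1/(P'-1)) = (w z powr (-1/(P-1))) powr \<rho> * v z powr (\<epsilon> / (P' - 1))" for z
    by (simp only: u_def powr_mult powr_powr)
  have \<rho>_y: "\<rho> * y = 1 + \<delta>2" using y(2) P' by (simp add: \<rho>_def field_simps)
  have exponent_x: "\<epsilon> * (Q - 1) * (x / (x - 1)) < 1"
    using x(3) by (simp add: mult_ac)
  have "\<epsilon> / (P' - 1) * (y / (y - 1)) = \<epsilon> * (y / (y - 1)) / (P' - 1)" by simp
  also have "\<dots> < 1" by (subst divide_less_eq_1_pos) (use y(3) P' in auto)
  finally have exponent_y: "\<epsilon> / (P' - 1) * (y / (y - 1)) < 1" .
  have exponents_pos: "0 < \<epsilon> * (Q - 1)" "0 < \<epsilon> / (P' - 1)" using \<epsilon> Av(2) P' by simp_all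
  have first: "\<And>a h. 0 < h \<Longrightarrow> (\<integral>\<^sup>+z\<in>cube a h. ennreal (u z) \<partial>lebesgue) \<noteq> \<infinity> \<and>
        avg (cube a h) u \<le> K1 powr (1/x) * avg (cube a h) w powr (1 + \<epsilon>)
          * avg (cube a h) (\<lambda>z. v z powr (-1/(Q-1))) powr (\<epsilon> * (Q - 1))"
    using avg_powr_mult_powr_le[OF _ _ _ RH_w _ A_weightD(5)[OF Av(1)] x(1,2) exponents_pos(1) exponent_x]
    unfolding u_eq by auto
  have second: "\<And>a h. 0 < h \<Longrightarrow> (\<integral>\<^sup>+z\<in>cube a h. ennreal (u z powr (-1/(P'-1))) \<partial>lebesgue) \<noteq> \<infinity> \<and>
        avg (cube a h) (\<lambda>z. u z powr (-1/(P'-1))) \<le> K2 powr (1/y)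
          * avg (cube a h) (\<lambda>z. w z powr (-1/(P-1))) powr \<rho> * avg (cube a h) v powr (\<epsilon> / (P' - 1))"
    using avg_powr_mult_powr_le[OF _ _ A_weightD(2)[OF Av(1)] RH_dual _ A_weightD(4)[OF Av(1)] y(1) \<rho>_y
        exponents_pos(2) exponent_y]
    unfolding dual_u_eq by auto
  define C where "C = K1 powr (1/x) * K2 powr ((P' - 1) / y) * max Cw 0 powr (1 + \<epsilon>) * max Cv 0 powr \<epsilon>"
  have "avg (cube a h) u * avg (cube a h) (\<lambda>z. u z powr (-1/(P'-1))) powr (P' - 1) \<le> C"
    if h: "0 < h" for a h
  proof -
    define aw where "aw = avg (cube a h) w"
    define as where "as = avg (cube a h) (\<lambda>z. w z powr (-1/(P-1)))"
    define av where "av = avg (cube a h) v"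
    define asv where "asv = avg (cube a h) (\<lambda>z. v z powr (-1/(Q-1)))"
    have nonneg: "0 \<le> aw" "0 \<le> as" "0 \<le> av" "0 \<le> asv"
      by (simp_all add: aw_def as_def av_def asv_def avg_nonneg)
    have "avg (cube a h) (\<lambda>z. u z powr (-1/(P'-1))) powr (P' - 1)
        \<le> (K2 powr (1/y) * as powr \<rho> * av powr (\<epsilon> / (P' - 1))) powr (P' - 1)"
      using second[OF h] P' unfolding as_def av_def by (intro powr_mono2) (auto simp: avg_nonneg)
    also have "\<dots> = K2 powr ((P' - 1) / y) * as powr ((1 + \<epsilon>) * (P - 1)) * av powr \<epsilon>"
      using P' by (simp add: powr_mult powr_powr \<rho>_def)
    finally have "avg (cube a h) u * avg (cube a h) (\<lambda>z. u z powr (-1/(P'-1))) powr (P' - 1)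
        \<le> (K1 powr (1/x) * aw powr (1 + \<epsilon>) * asv powr (\<epsilon> * (Q - 1)))
          * (K2 powr ((P' - 1) / y) * as powr ((1 + \<epsilon>) * (P - 1)) * av powr \<epsilon>)"
      using first[OF h] unfolding aw_def asv_def by (intro mult_mono) (auto simp: avg_nonneg)
    also have "\<dots> = K1 powr (1/x) * K2 powr ((P' - 1) / y)
        * (aw * as powr (P - 1)) powr (1 + \<epsilon>) * (av * asv powr (Q - 1)) powr \<epsilon>"
      using nonneg by (simp add: powr_mult powr_powr mult_ac)
    also have "\<dots> \<le> C"
    proof -
      have "(aw * as powr (P - 1)) powr (1 + \<epsilon>) \<le> max Cw 0 powr (1 + \<epsilon>)"
        using Cw[OF h, of a] \<epsilon> nonneg by (intro powr_mono2) (auto simp: aw_def as_def le_max_iff_disj)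
      moreover have "(av * asv powr (Q - 1)) powr \<epsilon> \<le> max Cv 0 powr \<epsilon>"
        using Cv[OF h, of a] \<epsilon> nonneg by (intro powr_mono2) (auto simp: av_def asv_def le_max_iff_disj)
      ultimately show ?thesis unfolding C_def by (intro mult_mono mult_left_mono) auto
    qed
    finally show ?thesis .
  qed
  then have "A_weight P' u"
    unfolding A_weight_def
  proof (intro conjI allI impI exI)
    show "AE x in lebesgue. 0 < u x"
      using A_weightD(3)[OF Aw(1)] A_weightD(3)[OF Av(1)] by eventually_elim (simp add: u_def)
    show "(\<integral>\<^sup>+z\<in>cube a h. ennreal (u z) \<partial>lebesgue) \<noteq> \<infinity>"
      "(\<integral>\<^sup>+z\<in>cube a h. ennreal (u z powr (-1/(P'-1))) \<partial>lebesgue) \<noteq> \<infinity>" if "0 < h" for a h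
      using first[OF that] second[OF that] by auto
  qed (auto simp: u_def)
  then show ?thesis by (simp add: u_def)
qed

text \<open>As \<open>(\<epsilon>, P') \<rightarrow> (0, P)\<close> the Hoelder exponents \<open>x\<close>, \<open>y\<close> required by
  \<open>A_weight_perturbed\<close> tend to the reverse Hoelder exponents \<open>1 + \<delta>1\<close>, \<open>1 + \<delta>2\<close>,
  while the constraints involving \<open>\<epsilon>\<close> become void.\<close>
lemma eventually_A_weight_perturbed:
  fixes w v :: "'a::euclidean_space \<Rightarrow> real"
  assumes Aw: "A_weight P w" "1 < P" and Av: "A_weight Q v" "1 < Q"
  shows "\<forall>\<^sub>F z in nhds (0, P). 0 < fst z \<longrightarrow>
    A_weight (snd z) (\<lambda>x. w x powr (1 + fst z) * v x powr (- fst z))"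
proof -
  obtain \<delta>1 K1 where "0 < \<delta>1" and RH_w: "reverse_Holder \<delta>1 K1 w"
    using A_weight_reverse_Holder[OF Aw] by blast
  have "1 < P / (P - 1)" using Aw(2) by (simp add: less_divide_eq_1_pos)
  then obtain \<delta>2 K2 where "0 < \<delta>2" and RH_dual: "reverse_Holder \<delta>2 K2 (\<lambda>x. w x powr (-1/(P-1)))"
    using A_weight_reverse_Holder[OF A_weight_dual[OF Aw]] by blast
  define x where "x \<epsilon> = (1 + \<delta>1) / (1 + \<epsilon>)" for \<epsilon> :: real
  define y where "y \<epsilon> P' = (1 + \<delta>2) * (P' - 1) / ((1 + \<epsilon>) * (P - 1))" for \<epsilon> P' :: real
  have \<epsilon>_lim: "((\<lambda>z. fst z) \<longlongrightarrow> 0) (nhds (0::real, P))"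
    and P'_lim: "((\<lambda>z. snd z) \<longlongrightarrow> P) (nhds (0::real, P))"
    using tendsto_fst[OF filterlim_ident, of "(0, P)"] tendsto_snd[OF filterlim_ident, of "(0, P)"] by simp_all
  have "((\<lambda>z. x (fst z)) \<longlongrightarrow> (1 + \<delta>1) / (1 + 0)) (nhds (0, P))"
    unfolding x_def by (intro tendsto_divide tendsto_add tendsto_const \<epsilon>_lim) simp
  then have x_lim: "((\<lambda>z. x (fst z)) \<longlongrightarrow> 1 + \<delta>1) (nhds (0, P))" by simp
  have "((\<lambda>z. y (fst z) (snd z)) \<longlongrightarrow> (1 + \<delta>2) * (P - 1) / ((1 + 0) * (P - 1))) (nhds (0, P))"
    unfolding y_def using Aw(2)
    by (intro tendsto_divide tendsto_mult tendsto_diff tendsto_add tendsto_const \<epsilon>_lim P'_lim) simp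
  then have y_lim: "((\<lambda>z. y (fst z) (snd z)) \<longlongrightarrow> 1 + \<delta>2) (nhds (0, P))"
    using Aw(2) by simp
  have "((\<lambda>z. fst z * (x (fst z) / (x (fst z) - 1)) * (Q - 1)) \<longlongrightarrow> 0 * ((1 + \<delta>1) / (1 + \<delta>1 - 1)) * (Q - 1))
      (nhds (0, P))"
    using \<open>0 < \<delta>1\<close> by (intro tendsto_mult tendsto_divide tendsto_diff tendsto_const \<epsilon>_lim x_lim) auto
  then have x_cond: "\<forall>\<^sub>F z in nhds (0, P). fst z * (x (fst z) / (x (fst z) - 1)) * (Q - 1) < 1"
    by (rule order_tendstoD) simp
  have "((\<lambda>z. snd z - 1 - fst z * (y (fst z) (snd z) / (y (fst z) (snd z) - 1)))
      \<longlongrightarrow> P - 1 - 0 * ((1 + \<delta>2) / (1 + \<delta>2 - 1))) (nhds (0, P))"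
    using \<open>0 < \<delta>2\<close>
    by (intro tendsto_mult tendsto_divide tendsto_diff tendsto_const \<epsilon>_lim P'_lim y_lim) auto
  then have y_cond: "\<forall>\<^sub>F z in nhds (0, P). fst z * (y (fst z) (snd z) / (y (fst z) (snd z) - 1)) < snd z - 1"
    using Aw(2) by (auto dest: order_tendstoD(1)[where a=0])
  have "\<forall>\<^sub>F z in nhds (0, P). 1 < snd z \<and> 1 < x (fst z) \<and> 1 < y (fst z) (snd z)"
    using order_tendstoD(1)[OF P'_lim Aw(2)] order_tendstoD(1)[OF x_lim, of 1]
      order_tendstoD(1)[OF y_lim, of 1] \<open>0 < \<delta>1\<close> \<open>0 < \<delta>2\<close>
    by (auto intro: eventually_conj)
  then show ?thesis
    using x_cond y_cond
  proof eventually_elim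
    case (elim z)
    show ?case
    proof
      assume "0 < fst z"
      then show "A_weight (snd z) (\<lambda>x. w x powr (1 + fst z) * v x powr (- fst z))"
        using elim Aw(2)
        by (intro A_weight_perturbed[OF Aw Av RH_w RH_dual, of _ _ "x (fst z)" "y (fst z) (snd z)"])
          (auto simp: x_def y_def)
    qed
  qed
qed

section \<open>Interpolation of exponents and weights\<close>

text \<open>The exponent \<open>p\<close> solving \<open>1/r = (1 - \<theta>)/p + \<theta>/q\<close>, and the weight
  \<open>u = w^(1 + \<epsilon>) v^(-\<epsilon>)\<close> solving \<open>w^(1/r) = u^((1 - \<theta>)/p) v^(\<theta>/q)\<close>.\<close>
definition interp_exponent :: "real \<Rightarrow> real \<Rightarrow> real \<Rightarrow> real" where
  "interp_exponent \<theta> r q = (1 - \<theta>) / (1/r - \<theta>/q)"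

definition interp_shift :: "real \<Rightarrow> real \<Rightarrow> real \<Rightarrow> real" where
  "interp_shift \<theta> r q = \<theta> / q / (1/r - \<theta>/q)"

definition interp_weight :: "real \<Rightarrow> real \<Rightarrow> real \<Rightarrow> ('a \<Rightarrow> real) \<Rightarrow> ('a \<Rightarrow> real) \<Rightarrow> 'a \<Rightarrow> real" where
  "interp_weight \<theta> r q w v = (\<lambda>x. w x powr (1 + interp_shift \<theta> r q) * v x powr (- interp_shift \<theta> r q))"

lemma tendsto_interp_exponent:
  "r \<noteq> 0 \<Longrightarrow> q \<noteq> 0 \<Longrightarrow> ((\<lambda>\<theta>. interp_exponent \<theta> r q) \<longlongrightarrow> r) (at_right 0)"
  unfolding interp_exponent_def by (auto intro!: tendsto_eq_intros)

lemma tendsto_interp_shift: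
  "r \<noteq> 0 \<Longrightarrow> q \<noteq> 0 \<Longrightarrow> ((\<lambda>\<theta>. interp_shift \<theta> r q) \<longlongrightarrow> 0) (at_right 0)"
  unfolding interp_shift_def by (auto intro!: tendsto_eq_intros)

lemma interp_exponent_eq:
  assumes "\<theta> < 1" "\<theta> / q < 1 / r"
  shows "1 / r = (1 - \<theta>) / interp_exponent \<theta> r q + \<theta> / q"
  using assms by (simp add: interp_exponent_def)

lemma interp_weight_eq:
  assumes "\<theta> < 1" "\<theta> / q < 1 / r" "0 < v x"
  shows "w x powr (1 / r) = interp_weight \<theta> r q w v x powr ((1 - \<theta>) / interp_exponent \<theta> r q) * v x powr (\<theta> / q)"
proof -
  define D where "D = 1 / r - \<theta> / q"
  have D: "0 < D" "(1 - \<theta>) / interp_exponent \<theta> r q = D"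
    using assms by (simp_all add: D_def interp_exponent_def)
  have "interp_shift \<theta> r q * D = \<theta> / q"
    using D(1) by (simp add: interp_shift_def flip: D_def)
  then have "(1 + interp_shift \<theta> r q) * D = 1 / r" "- interp_shift \<theta> r q * D = - (\<theta> / q)"
    by (simp_all add: distrib_right D_def)
  moreover have "v x powr (- (\<theta> / q)) * v x powr (\<theta> / q) = 1"
    using assms(3) by (simp flip: powr_add)
  ultimately show ?thesis
    unfolding D(2) interp_weight_def by (simp add: powr_mult powr_powr mult.assoc)
qed

lemma eventually_A_weight_interpolation:
  fixes w v :: "'a::euclidean_space \<Rightarrow> real"
  assumes Av: "A_weight (q/s) v" and Aw: "A_weight (r/s) w" and s: "0 < s" "s < q" "s < r"
  shows "\<forall>\<^sub>F \<theta> in at_right 0. \<theta> / q < 1 / r \<and> s < interp_exponent \<theta> r q \<and>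
    A_weight (interp_exponent \<theta> r q / s) (interp_weight \<theta> r q w v)"
proof -
  have r: "r \<noteq> 0" "q \<noteq> 0" using s by simp_all
  have "((\<lambda>\<theta>. \<theta> / q) \<longlongrightarrow> 0 / q) (at_right 0)" using r by (intro tendsto_intros) auto
  then have small: "\<forall>\<^sub>F \<theta> in at_right 0. \<theta> / q < 1 / r" using s by (auto intro: order_tendstoD)
  have "filterlim (\<lambda>\<theta>. (interp_shift \<theta> r q, interp_exponent \<theta> r q / s)) (nhds (0, r / s)) (at_right 0)"
    using tendsto_interp_shift[OF r] tendsto_interp_exponent[OF r] s
    by (intro tendsto_Pair tendsto_divide) auto
  with eventually_A_weight_perturbed[OF Aw _ Av] s
  have "\<forall>\<^sub>F \<theta> in at_right 0. 0 < interp_shift \<theta> r q \<longrightarrow>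
      A_weight (interp_exponent \<theta> r q / s) (interp_weight \<theta> r q w v)"
    unfolding interp_weight_def by (auto dest: eventually_compose_filterlim)
  moreover have "\<forall>\<^sub>F \<theta> in at_right 0. s < interp_exponent \<theta> r q"
    using order_tendstoD(1)[OF tendsto_interp_exponent[OF r]] s by auto
  ultimately show ?thesis
    using small eventually_at_right_less[of 0]
    by eventually_elim (use s in \<open>auto simp: interp_shift_def\<close>)
qed

lemma eventually_interpolation:
  fixes v w :: "nat \<Rightarrow> 'a::euclidean_space \<Rightarrow> real"
  assumes s: "\<forall>j<m. 0 < s j \<and> s j < q j \<and> s j < r j" and sum_r: "(\<Sum>j<m. 1 / r j) < 1"
    and "\<forall>j<m. A_weight (q j / s j) (v j)" "\<forall>j<m. A_weight (r j / s j) (w j)"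
  shows "\<forall>\<^sub>F \<theta> in at_right 0. (\<Sum>j<m. 1 / interp_exponent \<theta> (r j) (q j)) < 1 \<and>
    (\<forall>j\<in>{..<m}. \<theta> / q j < 1 / r j \<and> s j < interp_exponent \<theta> (r j) (q j) \<and>
      A_weight (interp_exponent \<theta> (r j) (q j) / s j) (interp_weight \<theta> (r j) (q j) (w j) (v j)))"
proof -
  have "r j \<noteq> 0" "q j \<noteq> 0" if "j < m" for j
    using s that by (metis less_trans order_less_irrefl)+
  then have "((\<lambda>\<theta>. \<Sum>j<m. 1 / interp_exponent \<theta> (r j) (q j)) \<longlongrightarrow> (\<Sum>j<m. 1 / r j)) (at_right 0)"
    by (intro tendsto_sum tendsto_divide tendsto_const tendsto_interp_exponent) auto
  moreover have "\<forall>\<^sub>F \<theta> in at_right 0. \<forall>j\<in>{..<m}. \<theta> / q j < 1 / r j \<and> s j < interp_exponent \<theta> (r j) (q j) \<and>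
      A_weight (interp_exponent \<theta> (r j) (q j) / s j) (interp_weight \<theta> (r j) (q j) (w j) (v j))"
    using assms by (intro eventually_ball_finite ballI eventually_A_weight_interpolation) auto
  ultimately show ?thesis
    using sum_r by (intro eventually_conj) (auto dest: order_tendstoD)
qed

lemma inverse_expo: "1 / expo m p = (\<Sum>j<m. 1 / p j)"
  by (simp add: expo_def)

lemma nu_powr:
  assumes "(\<Sum>j<m. 1 / p j) \<noteq> 0"
  shows "nu m f p x powr (c / expo m p) = (\<Prod>j<m. f j x powr (c / p j))"
proof -
  have "nu m f p x powr (c / expo m p) = (\<Prod>j<m. (f j x powr (expo m p / p j)) powr (c / expo m p))"
    unfolding nu_def by (rule prod_powr_distrib)
  also have "\<dots> = (\<Prod>j<m. f j x powr (c / p j))"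
  proof (rule prod.cong[OF refl])
    fix j
    have "expo m p / p j * (c / expo m p) = c / p j"
      using assms by (simp add: expo_def)
    then show "(f j x powr (expo m p / p j)) powr (c / expo m p) = f j x powr (c / p j)"
      by (simp add: powr_powr)
  qed
  finally show ?thesis .
qed

lemma expo_interpolation:
  assumes "\<forall>j<m. 1 / r j = (1 - \<theta>) / p j + \<theta> / q j"
  shows "1 / expo m r = (1 - \<theta>) / expo m p + \<theta> / expo m q"
proof -
  have "1 / expo m r = (\<Sum>j<m. (1 - \<theta>) * (1 / p j) + \<theta> * (1 / q j))"
    unfolding inverse_expo using assms by (intro sum.cong) auto
  also have "\<dots> = (1 - \<theta>) / expo m p + \<theta> / expo m q"
    by (simp add: sum.distrib sum_distrib_left expo_def)
  finally show ?thesis .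
qed

lemma AE_nu_interpolation:
  assumes "(\<Sum>j<m. 1 / r j) \<noteq> 0" "(\<Sum>j<m. 1 / p j) \<noteq> 0" "(\<Sum>j<m. 1 / q j) \<noteq> 0"
    and "\<forall>j<m. AE x in M. w j x powr (1 / r j) = u j x powr ((1 - \<theta>) / p j) * v j x powr (\<theta> / q j)"
  shows "AE x in M. nu m w r x powr (1 / expo m r)
    = nu m u p x powr ((1 - \<theta>) / expo m p) * nu m v q x powr (\<theta> / expo m q)"
proof -
  have "AE x in M. \<forall>j\<in>{..<m}. w j x powr (1 / r j) = u j x powr ((1 - \<theta>) / p j) * v j x powr (\<theta> / q j)"
    using assms(4) by (intro AE_finite_allI) auto
  then show ?thesis
  proof eventually_elim
    case (elim x)
    have "nu m w r x powr (1 / expo m r) = (\<Prod>j<m. u j x powr ((1 - \<theta>) / p j) * v j x powr (\<theta> / q j))"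
      unfolding nu_powr[OF assms(1)] using elim by (intro prod.cong) auto
    then show ?case
      by (simp add: prod.distrib nu_powr[OF assms(2)] nu_powr[OF assms(3)])
  qed
qed

lemma interpolation_identities:
  fixes v w :: "nat \<Rightarrow> 'a \<Rightarrow> real"
  assumes "m \<ge> 1" "\<theta> < 1"
    and j: "\<forall>j<m. 0 < q j \<and> 0 < r j \<and> \<theta> / q j < 1 / r j \<and> 0 < interp_exponent \<theta> (r j) (q j)"
    and v: "\<forall>j<m. AE x in M. 0 < v j x"
  defines "p \<equiv> \<lambda>j. interp_exponent \<theta> (r j) (q j)"
    and "u \<equiv> \<lambda>j. interp_weight \<theta> (r j) (q j) (w j) (v j)"
  shows "\<forall>j<m. 1 / r j = (1 - \<theta>) / p j + \<theta> / q j"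
    and "\<forall>j<m. AE x in M. w j x powr (1 / r j) = u j x powr ((1 - \<theta>) / p j) * v j x powr (\<theta> / q j)"
    and "1 / expo m r = (1 - \<theta>) / expo m p + \<theta> / expo m q"
    and "AE x in M. nu m w r x powr (1 / expo m r)
      = nu m u p x powr ((1 - \<theta>) / expo m p) * nu m v q x powr (\<theta> / expo m q)"
proof -
  show exponents: "\<forall>j<m. 1 / r j = (1 - \<theta>) / p j + \<theta> / q j"
    unfolding p_def using assms(2) j by (blast intro: interp_exponent_eq)
  show weights: "\<forall>j<m. AE x in M. w j x powr (1 / r j) = u j x powr ((1 - \<theta>) / p j) * v j x powr (\<theta> / q j)"
  proof (intro allI impI)
    fix j assume "j < m"
    show "AE x in M. w j x powr (1 / r j) = u j x powr ((1 - \<theta>) / p j) * v j x powr (\<theta> / q j)"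
      using v[rule_format, OF \<open>j < m\<close>] unfolding p_def u_def
      by eventually_elim (use assms(2) j[rule_format, OF \<open>j < m\<close>] in \<open>auto intro: interp_weight_eq\<close>)
  qed
  show "1 / expo m r = (1 - \<theta>) / expo m p + \<theta> / expo m q"
    by (rule expo_interpolation[OF exponents])
  have sum_nonzero: "(\<Sum>j<m. 1 / f j) \<noteq> 0" if "\<And>j. j < m \<Longrightarrow> 0 < f j" for f :: "nat \<Rightarrow> real"
    using assms(1) that sum_pos[of "{..<m}" "\<lambda>j. 1 / f j"] by (auto simp: lessThan_empty_iff)
  show "AE x in M. nu m w r x powr (1 / expo m r)
      = nu m u p x powr ((1 - \<theta>) / expo m p) * nu m v q x powr (\<theta> / expo m q)"
    using j by (intro AE_nu_interpolation[OF sum_nonzero sum_nonzero sum_nonzero weights]) (auto simp: p_def)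
qed

theorem lemma5p3:
  fixes m :: nat and s q r :: "nat \<Rightarrow> real"
    and v w :: "nat \<Rightarrow> 'a::euclidean_space \<Rightarrow> real"
  assumes "m \<ge> 1"
    and "\<forall>j<m. 1 \<le> s j"
    and "\<forall>j<m. s j < q j \<and> s j < r j"
    and "(\<Sum>j<m. 1 / q j) < 1"
    and "(\<Sum>j<m. 1 / r j) < 1"
    and "\<forall>j<m. A_weight (q j / s j) (v j)"
    and "\<forall>j<m. A_weight (r j / s j) (w j)"
  shows "\<exists>(p :: nat \<Rightarrow> real) (u :: nat \<Rightarrow> 'a \<Rightarrow> real) (\<theta> :: real).
           (\<forall>j<m. s j < p j) \<and> (\<Sum>j<m. 1 / p j) < 1 \<and>
           (\<forall>j<m. A_weight (p j / s j) (u j)) \<and>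
           0 < \<theta> \<and> \<theta> < 1 \<and>
           (\<forall>j<m. 1 / r j = (1 - \<theta>) / p j + \<theta> / q j) \<and>
           (\<forall>j<m. AE x in lebesgue.
              w j x powr (1 / r j) = u j x powr ((1 - \<theta>) / p j) * v j x powr (\<theta> / q j)) \<and>
           1 / expo m r = (1 - \<theta>) / expo m p + \<theta> / expo m q \<and>
           (AE x in lebesgue.
              nu m w r x powr (1 / expo m r)
              = nu m u p x powr ((1 - \<theta>) / expo m p) * nu m v q x powr (\<theta> / expo m q))"
proof -
  have s: "\<forall>j<m. 0 < s j \<and> s j < q j \<and> s j < r j"
    using assms(2,3) by force
  have "\<forall>\<^sub>F \<theta> in at_right 0. 0 < \<theta> \<and> \<theta> < (1::real)"
    by (auto simp: eventually_at_right_field intro: exI[of _ 1])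
  from eventually_happens'[OF trivial_limit_at_right_real
      eventually_conj[OF this eventually_interpolation[OF s assms(5,6,7)]]]
  obtain \<theta> where \<theta>: "0 < \<theta>" "\<theta> < 1" and sum_p: "(\<Sum>j<m. 1 / interp_exponent \<theta> (r j) (q j)) < 1"
    and j: "\<forall>j\<in>{..<m}. \<theta> / q j < 1 / r j \<and> s j < interp_exponent \<theta> (r j) (q j) \<and>
      A_weight (interp_exponent \<theta> (r j) (q j) / s j) (interp_weight \<theta> (r j) (q j) (w j) (v j))"
    by blast
  have exponents_pos: "\<forall>j<m. 0 < q j \<and> 0 < r j \<and> \<theta> / q j < 1 / r j \<and> 0 < interp_exponent \<theta> (r j) (q j)"
    using s j by force
  have v_pos: "\<forall>j<m. AE x in lebesgue. 0 < v j x"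
    using assms(6) A_weightD(3) by blast
  note identities = interpolation_identities[OF assms(1) \<theta>(2) exponents_pos v_pos]
  show ?thesis
    by (intro exI[of _ "\<lambda>j. interp_exponent \<theta> (r j) (q j)"]
        exI[of _ "\<lambda>j. interp_weight \<theta> (r j) (q j) (w j) (v j)"] exI[of _ \<theta>] conjI)
      (use \<theta> sum_p j identities in auto)
qed

end
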